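(* For the discrete memoryless state-dependent multiaccess channel with degraded message sets described in the context, the capacity region $\mathcal C$ is contained in the closure of the set of all rate pairs $(R_c,R_1)$ for which there exists a joint distribution of the form $$P_{S,X_1,X_2,Y}=Q_S\,P_{X_1}\,P_{X_2|X_1,S}\,W_{Y|X_1,X_2,S}$$ such that $$R_1\le I(X_1;Y|S,X_2),\qquad R_c+R_1\le I(X_1,X_2;Y|S)-I(X_1;S|Y).$$
   Context: Finite alphabets $\mathcal S,\mathcal X_1,\mathcal X_2,\mathcal Y$. The channel is memoryless with transition law $W_{Y|X_1,X_2,S}$: for length-$n$ sequences, $P(y^n|x_1^n,x_2^n,s^n)=\prod_{i=1}^n W_{Y|X_1,X_2,S}(y_i|x_{1,i},x_{2,i},s_i)$. The state sequence $S^n$ is i.i.d. with law $Q_S$. Two independent messages, uniformly distributed and independent of $S^n$: a common message $W_c\in\{1,\dots,2^{nR_c}\}$ and an individual message $W_1\in\{1,\dots,2^{nR_1}\}$. A $(2^{nR_c},2^{nR_1},n)$-code consists of an encoder $\phi_1^n:\mathcal W_c\times\mathcal W_1\to\mathcal X_1^n$ at the "uninformed" encoder (which does not know the state), an encoder $\phi_2^n:\mathcal S^n\times\mathcal W_c\to\mathcal X_2^n$ at the "informed" encoder (which knows the whole state sequence $S^n$ non-causally and only the common message), and a decoder $\psi^n:\mathcal Y^n\to\mathcal W_c\times\mathcal W_1$; the decoder does not know the state. The error probability is $P_e^n=\Pr[\psi^n(Y^n)\ne(W_c,W_1)]$. A pair $(R_c,R_1)$ is achievable if there is a sequence of such codes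 with $P_e^n\to0$; the capacity region $\mathcal C$ is the closure of the set of achievable pairs. *)

theory Defs
  imports "HOL-Probability.Probability"
begin

definition seqs :: "nat \<Rightarrow> 'a list set" where
  "seqs n = {xs. length xs = n}"

definition chan_n :: "('x1 \<Rightarrow> 'x2 \<Rightarrow> 's \<Rightarrow> 'y pmf) \<Rightarrow> 'x1 list \<Rightarrow> 'x2 list \<Rightarrow> 's list \<Rightarrow> 'y list \<Rightarrow> real" where
  "chan_n W x1 x2 s y = (\<Prod>i<length y. pmf (W (x1 ! i) (x2 ! i) (s ! i)) (y ! i))"

definition state_n :: "'s pmf \<Rightarrow> 's list \<Rightarrow> real" where
  "state_n Q s = (\<Prod>i<length s. pmf Q (s ! i))"

definition num_msgs :: "nat \<Rightarrow> real \<Rightarrow> nat" where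
  "num_msgs n R = nat \<lceil>2 powr (real n * R)\<rceil>"

text \<open>Valid (Mc, M1, n) code: uninformed encoder phi1 (common and private message),
  informed encoder phi2 (whole state sequence and common message), decoder psi.\<close>
definition is_code :: "nat \<Rightarrow> nat \<Rightarrow> nat \<Rightarrow> (nat \<Rightarrow> nat \<Rightarrow> 'x1 list) \<Rightarrow> ('s list \<Rightarrow> nat \<Rightarrow> 'x2 list)
    \<Rightarrow> ('y list \<Rightarrow> nat \<times> nat) \<Rightarrow> bool" where
  "is_code n Mc M1 phi1 phi2 psi \<longleftrightarrow>
     (\<forall>wc\<in>{1..Mc}. \<forall>w1\<in>{1..M1}. length (phi1 wc w1) = n) \<and>
     (\<forall>s\<in>seqs n. \<forall>wc\<in>{1..Mc}. length (phi2 s wc) = n)"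

definition err_prob :: "'s pmf \<Rightarrow> ('x1 \<Rightarrow> 'x2 \<Rightarrow> 's \<Rightarrow> 'y pmf) \<Rightarrow> nat \<Rightarrow> nat \<Rightarrow> nat
    \<Rightarrow> (nat \<Rightarrow> nat \<Rightarrow> 'x1 list) \<Rightarrow> ('s list \<Rightarrow> nat \<Rightarrow> 'x2 list) \<Rightarrow> ('y list \<Rightarrow> nat \<times> nat) \<Rightarrow> real" where
  "err_prob Q W n Mc M1 phi1 phi2 psi =
     (1 / (real Mc * real M1)) *
     (\<Sum>wc\<in>{1..Mc}. \<Sum>w1\<in>{1..M1}. \<Sum>s\<in>seqs n. \<Sum>y\<in>seqs n.
        (if psi y \<noteq> (wc, w1) then state_n Q s * chan_n W (phi1 wc w1) (phi2 s wc) s y else 0))"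

definition achievable :: "'s pmf \<Rightarrow> ('x1 \<Rightarrow> 'x2 \<Rightarrow> 's \<Rightarrow> 'y pmf) \<Rightarrow> real \<times> real \<Rightarrow> bool" where
  "achievable Q W r \<longleftrightarrow> (case r of (Rc, R1) \<Rightarrow>
     0 \<le> Rc \<and> 0 \<le> R1 \<and>
     (\<exists>(phi1 :: nat \<Rightarrow> nat \<Rightarrow> nat \<Rightarrow> 'x1 list) (phi2 :: nat \<Rightarrow> 's list \<Rightarrow> nat \<Rightarrow> 'x2 list)
        (psi :: nat \<Rightarrow> 'y list \<Rightarrow> nat \<times> nat).
        (\<forall>n. is_code n (num_msgs n Rc) (num_msgs n R1) (phi1 n) (phi2 n) (psi n)) \<and>
        (\<lambda>n. err_prob Q W n (num_msgs n Rc) (num_msgs n R1) (phi1 n) (phi2 n) (psi n))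
          \<longlonglongrightarrow> 0))"

definition capacity_region :: "'s pmf \<Rightarrow> ('x1 \<Rightarrow> 'x2 \<Rightarrow> 's \<Rightarrow> 'y pmf) \<Rightarrow> (real \<times> real) set" where
  "capacity_region Q W = closure {r. achievable Q W r}"

definition marg :: "('w::finite \<Rightarrow> real) \<Rightarrow> ('w \<Rightarrow> 'v) \<Rightarrow> 'v \<Rightarrow> real" where
  "marg P f v = (\<Sum>w\<in>{w. f w = v}. P w)"

definition cond_mi :: "('w::finite \<Rightarrow> real) \<Rightarrow> ('w \<Rightarrow> 'a) \<Rightarrow> ('w \<Rightarrow> 'b) \<Rightarrow> ('w \<Rightarrow> 'c) \<Rightarrow> real" where
  "cond_mi P X Y Z =
     (\<Sum>x\<in>range X. \<Sum>y\<in>range Y. \<Sum>z\<in>range Z.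
        (let pxyz = marg P (\<lambda>w. (X w, Y w, Z w)) (x, y, z);
             pxz = marg P (\<lambda>w. (X w, Z w)) (x, z);
             pyz = marg P (\<lambda>w. (Y w, Z w)) (y, z);
             pz = marg P Z z
         in if pxyz = 0 then 0 else pxyz * log 2 (pxyz * pz / (pxz * pyz))))"

definition joint :: "'s pmf \<Rightarrow> 'x1 pmf \<Rightarrow> ('x1 \<Rightarrow> 's \<Rightarrow> 'x2 pmf) \<Rightarrow> ('x1 \<Rightarrow> 'x2 \<Rightarrow> 's \<Rightarrow> 'y pmf)
    \<Rightarrow> 's \<times> 'x1 \<times> 'x2 \<times> 'y \<Rightarrow> real" where
  "joint Q p1 p2 W = (\<lambda>(s, x1, x2, y). pmf Q s * pmf p1 x1 * pmf (p2 x1 s) x2 * pmf (W x1 x2 s) y)"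

definition vS :: "'s \<times> 'x1 \<times> 'x2 \<times> 'y \<Rightarrow> 's" where "vS w = fst w"
definition vX1 :: "'s \<times> 'x1 \<times> 'x2 \<times> 'y \<Rightarrow> 'x1" where "vX1 w = fst (snd w)"
definition vX2 :: "'s \<times> 'x1 \<times> 'x2 \<times> 'y \<Rightarrow> 'x2" where "vX2 w = fst (snd (snd w))"
definition vY :: "'s \<times> 'x1 \<times> 'x2 \<times> 'y \<Rightarrow> 'y" where "vY w = snd (snd (snd w))"

definition outer_region :: "'s::finite pmf \<Rightarrow> ('x1::finite \<Rightarrow> 'x2::finite \<Rightarrow> 's \<Rightarrow> 'y::finite pmf) \<Rightarrow> (real \<times> real) set" where
  "outer_region Q W = {(Rc, R1). \<exists>(p1 :: 'x1 pmf) (p2 :: 'x1 \<Rightarrow> 's \<Rightarrow> 'x2 pmf).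
      let P = joint Q p1 p2 W in
      R1 \<le> cond_mi P vX1 vY (\<lambda>w. (vS w, vX2 w)) \<and>
      Rc + R1 \<le> cond_mi P (\<lambda>w. (vX1 w, vX2 w)) vY vS - cond_mi P vX1 vS vY}"

end

theory Submission
  imports Defs
begin

(* Every code of blocklength n induces a finite probability space
   (messages, state sequence, output sequence).  On the code space,
   Fano's inequality bounds the equivocation of the messages given Y^n, and
   chain-rule arguments bound log M1 and log Mc + log M1 by sums over the n
   letters of single-letter quantities (private_rate_bound, sum_rate_bound).
   A uniform time-sharing variable turns these averages into the information
   quantities of a single joint law of the required product form
   Q_S P_X1 P_X2|X1,S W (single_letter), whose existence is a disintegration
   argument.  Finally, rate pairs of achievable codes are shown to lie within
   a vanishing distance of the outer region, hence in its closure. *)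

definition ent :: "'a pmf \<Rightarrow> real" where
  "ent p = measure_pmf.expectation p (\<lambda>x. - log 2 (pmf p x))"

definition H :: "'w pmf \<Rightarrow> ('w \<Rightarrow> 'a) \<Rightarrow> real" where
  "H M X = ent (map_pmf X M)"

lemma finite_set_pmf: "finite (set_pmf (p :: 'a::finite pmf))"
  by (rule finite_subset[OF subset_UNIV]) simp

lemma expectation_finite:
  "finite (set_pmf M) \<Longrightarrow> measure_pmf.expectation M f = (\<Sum>x\<in>set_pmf M. pmf M x * f x)"
  by (subst integral_measure_pmf_real[of "set_pmf M"]) (auto simp: mult.commute)

lemma expectation_cong:
  "(\<And>x. x \<in> set_pmf M \<Longrightarrow> f x = g x) \<Longrightarrow> measure_pmf.expectation M f = measure_pmf.expectation M g"
  by (intro integral_cong_AE) (auto simp: AE_measure_pmf_iff)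

lemma expectation_mono:
  assumes "finite (set_pmf M)" "\<And>x. x \<in> set_pmf M \<Longrightarrow> f x \<le> g x"
  shows "measure_pmf.expectation M f \<le> measure_pmf.expectation M (g :: _ \<Rightarrow> real)"
proof (rule integral_mono_AE)
  show "integrable (measure_pmf M) f" "integrable (measure_pmf M) g"
    using assms(1) by (auto intro: integrable_measure_pmf_finite)
  show "AE x in measure_pmf M. f x \<le> g x" using assms(2) by (auto simp: AE_measure_pmf_iff)
qed

lemma expectation_add:
  assumes "finite (set_pmf M)"
  shows "measure_pmf.expectation M (\<lambda>x. f x + g x)
       = measure_pmf.expectation M f + measure_pmf.expectation M (g :: _ \<Rightarrow> real)"
  by (rule Bochner_Integration.integral_add; rule integrable_measure_pmf_finite; rule assms)

lemma expectation_diff: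
  assumes "finite (set_pmf M)"
  shows "measure_pmf.expectation M (\<lambda>x. f x - g x)
       = measure_pmf.expectation M f - measure_pmf.expectation M (g :: _ \<Rightarrow> real)"
  by (rule Bochner_Integration.integral_diff; rule integrable_measure_pmf_finite; rule assms)

lemma expectation_bind:
  assumes finA: "finite (set_pmf A)" and finK: "\<And>a. a \<in> set_pmf A \<Longrightarrow> finite (set_pmf (K a))"
  shows "measure_pmf.expectation (bind_pmf A K) (g :: _ \<Rightarrow> real)
       = measure_pmf.expectation A (\<lambda>a. measure_pmf.expectation (K a) g)"
proof -
  let ?U = "\<Union>a\<in>set_pmf A. set_pmf (K a)"
  have finU: "finite ?U" using finA finK by auto
  have "measure_pmf.expectation (bind_pmf A K) g = (\<Sum>y\<in>?U. g y * pmf (bind_pmf A K) y)"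
    using finU by (subst integral_measure_pmf_real[of ?U]) auto
  also have "\<dots> = (\<Sum>y\<in>?U. \<Sum>a\<in>set_pmf A. g y * (pmf A a * pmf (K a) y))"
    unfolding pmf_bind using finA by (intro sum.cong refl) (simp add: expectation_finite sum_distrib_left)
  also have "\<dots> = (\<Sum>a\<in>set_pmf A. pmf A a * (\<Sum>y\<in>?U. g y * pmf (K a) y))"
    by (subst sum.swap) (simp add: sum_distrib_left algebra_simps)
  also have "\<dots> = (\<Sum>a\<in>set_pmf A. pmf A a * measure_pmf.expectation (K a) g)"
  proof (intro sum.cong refl arg_cong2[where f="(*)"])
    fix a assume "a \<in> set_pmf A"
    then show "(\<Sum>y\<in>?U. g y * pmf (K a) y) = measure_pmf.expectation (K a) g"
      using finU by (subst integral_measure_pmf_real[of ?U]) auto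
  qed
  also have "\<dots> = measure_pmf.expectation A (\<lambda>a. measure_pmf.expectation (K a) g)"
    using finA by (simp add: expectation_finite)
  finally show ?thesis .
qed

lemma measure_pmf_finite_support:
  "finite (set_pmf M) \<Longrightarrow> measure_pmf.prob M A = (\<Sum>w\<in>{w\<in>set_pmf M. w \<in> A}. pmf M w)"
proof -
  assume f: "finite (set_pmf M)"
  have "{w\<in>set_pmf M. w \<in> A} = A \<inter> set_pmf M" by blast
  then show ?thesis using f by (subst measure_Int_set_pmf[symmetric]) (simp add: measure_measure_pmf_finite)
qed

lemma pmf_map_finite_support:
  "finite (set_pmf M) \<Longrightarrow> pmf (map_pmf X M) v = (\<Sum>w\<in>{w\<in>set_pmf M. X w = v}. pmf M w)"
  by (simp add: pmf_map measure_pmf_finite_support)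

lemma pmf_map_image_pos: "w \<in> set_pmf M \<Longrightarrow> pmf (map_pmf X M) (X w) > 0"
  by (simp add: pmf_positive)

lemma ent_sum:
  "finite (set_pmf p) \<Longrightarrow> ent p = (\<Sum>x\<in>set_pmf p. pmf p x * (- log 2 (pmf p x)))"
  unfolding ent_def by (rule expectation_finite)

lemma H_expectation: "H M X = measure_pmf.expectation M (\<lambda>w. - log 2 (pmf (map_pmf X M) (X w)))"
  unfolding H_def ent_def by simp

lemma H_id: "H M (\<lambda>x. x) = ent M"
  unfolding H_def by simp

lemma H_comp: "H M (\<lambda>w. f (g w)) = H (map_pmf g M) f"
  unfolding H_def by (simp add: map_pmf_comp)

lemma ent_return: "ent (return_pmf c) = 0"
  unfolding ent_def by simp

lemma H_const: "H M (\<lambda>_. c) = 0"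
  unfolding H_def by (simp add: ent_return)

lemma ent_map_inj:
  assumes inj: "inj_on f (set_pmf p)"
  shows "ent (map_pmf f p) = ent p"
  unfolding ent_def by (simp, rule expectation_cong) (simp add: pmf_map_inj[OF inj])

lemma ent_unif:
  assumes "finite A" "A \<noteq> {}"
  shows "ent (pmf_of_set A) = log 2 (card A)"
proof -
  have c: "card A > 0" using assms by (simp add: card_gt_0_iff)
  have "ent (pmf_of_set A) = (\<Sum>x\<in>A. 1 / card A * (- log 2 (1 / card A)))"
    using assms by (subst ent_sum) auto
  also have "\<dots> = log 2 (card A)" using c by (simp add: log_divide)
  finally show ?thesis .
qed

lemma log2_le_linear: "(y::real) > 0 \<Longrightarrow> log 2 y \<le> (y - 1) / ln 2"
  unfolding log_def by (intro divide_right_mono ln_le_minus_one) auto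

lemma gibbs_inequality:
  assumes fin: "finite (set_pmf p)" and rpos: "\<And>x. x \<in> set_pmf p \<Longrightarrow> r x > 0"
    and rsum: "(\<Sum>x\<in>set_pmf p. r x) \<le> 1"
  shows "ent p \<le> measure_pmf.expectation p (\<lambda>x. - log 2 (r x))"
proof -
  have "measure_pmf.expectation p (\<lambda>x. - log 2 (r x)) - ent p
      = (\<Sum>x\<in>set_pmf p. pmf p x * (- log 2 (r x / pmf p x)))"
    unfolding ent_sum[OF fin] expectation_finite[OF fin] sum_subtractf[symmetric]
    by (intro sum.cong refl)
       (simp add: log_divide rpos pmf_positive algebra_simps less_imp_neq[OF rpos, symmetric]
                  less_imp_neq[OF pmf_positive, symmetric])
  also have "\<dots> \<ge> (\<Sum>x\<in>set_pmf p. pmf p x * (- ((r x / pmf p x - 1) / ln 2)))"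
    by (intro sum_mono mult_left_mono) (auto intro!: log2_le_linear simp: rpos pmf_positive)
  moreover have "(\<Sum>x\<in>set_pmf p. pmf p x) = 1" using fin by (simp add: sum_pmf_eq_1)
  moreover have "(\<Sum>x\<in>set_pmf p. pmf p x * (- ((r x / pmf p x - 1) / ln 2)))
      = ((\<Sum>x\<in>set_pmf p. pmf p x) - (\<Sum>x\<in>set_pmf p. r x)) / ln 2"
    unfolding sum_divide_distrib sum_subtractf[symmetric]
    by (intro sum.cong refl) (simp add: field_simps less_imp_neq[OF pmf_positive, symmetric])
  ultimately have "measure_pmf.expectation p (\<lambda>x. - log 2 (r x)) - ent p \<ge> (1 - (\<Sum>x\<in>set_pmf p. r x)) / ln 2"
    by (smt (verit))
  moreover have "(1 - (\<Sum>x\<in>set_pmf p. r x)) / ln 2 \<ge> 0" using rsum by simp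
  ultimately show ?thesis by linarith
qed

lemma H_function_le:
  assumes fin: "finite (set_pmf M)" and h: "\<And>w. w \<in> set_pmf M \<Longrightarrow> X w = h (Y w)"
  shows "H M X \<le> H M Y"
  unfolding H_expectation
proof (rule expectation_mono[OF fin])
  fix w assume w: "w \<in> set_pmf M"
  have "{v \<in> set_pmf M. Y v = Y w} \<subseteq> {v \<in> set_pmf M. X v = X w}"
    using h w by auto
  then have "pmf (map_pmf Y M) (Y w) \<le> pmf (map_pmf X M) (X w)"
    unfolding pmf_map_finite_support[OF fin] using fin by (intro sum_mono2) auto
  moreover have "pmf (map_pmf Y M) (Y w) > 0" using pmf_map_image_pos[OF w] .
  ultimately show "- log 2 (pmf (map_pmf X M) (X w)) \<le> - log 2 (pmf (map_pmf Y M) (Y w))"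
    by simp
qed

lemma H_bijection:
  assumes fin: "finite (set_pmf M)" and "\<And>w. w \<in> set_pmf M \<Longrightarrow> X w = h (Y w)"
    and "\<And>w. w \<in> set_pmf M \<Longrightarrow> Y w = g (X w)"
  shows "H M X = H M Y"
proof -
  have "H M X \<le> H M Y" by (rule H_function_le[OF fin, of X h Y]) (rule assms(2))
  moreover have "H M Y \<le> H M X" by (rule H_function_le[OF fin, of Y g X]) (rule assms(3))
  ultimately show ?thesis by linarith
qed

text \<open>The weights \<open>p(x,z) p(y,z) / p(z)\<close> (the law making \<open>X\<close> and \<open>Y\<close> conditionally
  independent given \<open>Z\<close>) sum to at most one over the support of \<open>(X,Y,Z)\<close>.\<close>

lemma sum_pmf_map_slice:
  assumes fin: "finite (set_pmf M)"
  shows "(\<Sum>y\<in>Y ` {w\<in>set_pmf M. Z w = z}. pmf (map_pmf (\<lambda>w. (Y w, Z w)) M) (y, z)) = pmf (map_pmf Z M) z"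
proof -
  let ?T = "{w\<in>set_pmf M. Z w = z}"
  have "pmf (map_pmf Z M) z = (\<Sum>w\<in>?T. pmf M w)" by (rule pmf_map_finite_support[OF fin])
  also have "\<dots> = (\<Sum>y\<in>Y ` ?T. \<Sum>w\<in>{w\<in>?T. Y w = y}. pmf M w)"
    using fin by (subst sum.image_gen[of ?T _ Y]) auto
  also have "\<dots> = (\<Sum>y\<in>Y ` ?T. pmf (map_pmf (\<lambda>w. (Y w, Z w)) M) (y, z))"
    by (intro sum.cong refl, subst pmf_map_finite_support[OF fin]) (auto intro!: sum.cong)
  finally show ?thesis by simp
qed

lemma sum_cond_indep_weights_le_1:
  fixes X :: "'w \<Rightarrow> 'a" and Y :: "'w \<Rightarrow> 'b" and Z :: "'w \<Rightarrow> 'c"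
  assumes fin: "finite (set_pmf M)"
  defines "r \<equiv> \<lambda>(x, y, z). pmf (map_pmf (\<lambda>w. (X w, Z w)) M) (x, z)
                 * pmf (map_pmf (\<lambda>w. (Y w, Z w)) M) (y, z) / pmf (map_pmf Z M) z"
  shows "(\<Sum>v\<in>set_pmf (map_pmf (\<lambda>w. (X w, Y w, Z w)) M). r v) \<le> 1"
proof -
  let ?S = "set_pmf M"
  let ?Sig = "SIGMA xz:(\<lambda>w. (X w, Z w)) ` ?S. Y ` {w\<in>?S. Z w = snd xz}"
  let ?g = "\<lambda>((x,z),y). (x,y,z)"
  have sub: "(\<lambda>w. (X w, Y w, Z w)) ` ?S \<subseteq> ?g ` ?Sig"
  proof
    fix v assume "v \<in> (\<lambda>w. (X w, Y w, Z w)) ` ?S"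
    then obtain w where w: "w \<in> ?S" "v = ?g ((X w, Z w), Y w)" by auto
    have "((X w, Z w), Y w) \<in> ?Sig" using w(1) by auto
    then show "v \<in> ?g ` ?Sig" using w(2) by blast
  qed
  have rnn: "r v \<ge> 0" for v by (cases v) (simp add: r_def)
  have "(\<Sum>v\<in>set_pmf (map_pmf (\<lambda>w. (X w, Y w, Z w)) M). r v) \<le> (\<Sum>v\<in>?g ` ?Sig. r v)"
    using sub fin rnn by (intro sum_mono2) auto
  also have "\<dots> = (\<Sum>u\<in>?Sig. r (?g u))"
  proof -
    have "inj_on ?g ?Sig" by (rule inj_onI) auto
    then show ?thesis by (simp add: sum.reindex comp_def)
  qed
  also have "\<dots> = (\<Sum>xz\<in>(\<lambda>w. (X w, Z w)) ` ?S. \<Sum>y\<in>Y ` {w\<in>?S. Z w = snd xz}. r (?g (xz, y)))"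
    using fin by (subst sum.Sigma) (auto simp: split_beta)
  also have "\<dots> = (\<Sum>xz\<in>(\<lambda>w. (X w, Z w)) ` ?S. pmf (map_pmf (\<lambda>w. (X w, Z w)) M) xz)"
  proof (intro sum.cong refl)
    fix xz assume xz: "xz \<in> (\<lambda>w. (X w, Z w)) ` ?S"
    then obtain w where w: "w \<in> ?S" "xz = (X w, Z w)" by blast
    obtain x z where xzd: "xz = (x, z)" by force
    have pz: "pmf (map_pmf Z M) z > 0" using pmf_map_image_pos[OF w(1), of Z] w(2) xzd by simp
    have "(\<Sum>y\<in>Y ` {w\<in>?S. Z w = snd xz}. r (?g (xz, y)))
        = pmf (map_pmf (\<lambda>w. (X w, Z w)) M) (x, z) / pmf (map_pmf Z M) z
          * (\<Sum>y\<in>Y ` {w\<in>?S. Z w = z}. pmf (map_pmf (\<lambda>w. (Y w, Z w)) M) (y, z))"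
      by (simp add: xzd r_def sum_distrib_left)
    then show "(\<Sum>y\<in>Y ` {w\<in>?S. Z w = snd xz}. r (?g (xz, y))) = pmf (map_pmf (\<lambda>w. (X w, Z w)) M) xz"
      using sum_pmf_map_slice[OF fin, of Y Z z] pz by (simp add: xzd)
  qed
  also have "\<dots> = 1" using fin by (intro sum_pmf_eq_1) auto
  finally show ?thesis .
qed

text \<open>Submodularity of entropy, i.e. non-negativity of the conditional mutual
  information \<open>I(X;Y|Z)\<close>: Gibbs' inequality against the conditionally independent law.\<close>

lemma H_submodular:
  assumes fin: "finite (set_pmf M)"
  shows "H M (\<lambda>w. (X w, Y w, Z w)) + H M Z \<le> H M (\<lambda>w. (X w, Z w)) + H M (\<lambda>w. (Y w, Z w))"
proof -
  define pXZ where "pXZ = pmf (map_pmf (\<lambda>w. (X w, Z w)) M)"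
  define pYZ where "pYZ = pmf (map_pmf (\<lambda>w. (Y w, Z w)) M)"
  define pZ where "pZ = pmf (map_pmf Z M)"
  define r where "r = (\<lambda>(x,y,z). pXZ (x,z) * pYZ (y,z) / pZ z)"
  have pos: "pXZ (X w, Z w) > 0" "pYZ (Y w, Z w) > 0" "pZ (Z w) > 0" if "w \<in> set_pmf M" for w
    unfolding pXZ_def pYZ_def pZ_def using pmf_map_image_pos[OF that] by auto
  have "H M (\<lambda>w. (X w, Y w, Z w))
      \<le> measure_pmf.expectation (map_pmf (\<lambda>w. (X w, Y w, Z w)) M) (\<lambda>v. - log 2 (r v))"
    unfolding H_def
  proof (rule gibbs_inequality)
    show "finite (set_pmf (map_pmf (\<lambda>w. (X w, Y w, Z w)) M))" using fin by simp
    show "r v > 0" if "v \<in> set_pmf (map_pmf (\<lambda>w. (X w, Y w, Z w)) M)" for v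
      using that pos by (auto simp: r_def)
    show "(\<Sum>v\<in>set_pmf (map_pmf (\<lambda>w. (X w, Y w, Z w)) M). r v) \<le> 1"
      using sum_cond_indep_weights_le_1[OF fin] unfolding r_def pXZ_def pYZ_def pZ_def .
  qed
  also have "\<dots> = measure_pmf.expectation M
      (\<lambda>w. (- log 2 (pXZ (X w, Z w)) + - log 2 (pYZ (Y w, Z w))) - - log 2 (pZ (Z w)))"
    unfolding integral_map_pmf
  proof (rule expectation_cong)
    fix w assume w: "w \<in> set_pmf M"
    from pos[OF w] show "- log 2 (r (X w, Y w, Z w))
        = - log 2 (pXZ (X w, Z w)) + - log 2 (pYZ (Y w, Z w)) - - log 2 (pZ (Z w))"
      by (simp add: r_def log_divide log_mult)
  qed
  also have "\<dots> = H M (\<lambda>w. (X w, Z w)) + H M (\<lambda>w. (Y w, Z w)) - H M Z"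
    unfolding expectation_diff[OF fin] expectation_add[OF fin] H_expectation pXZ_def pYZ_def pZ_def
    by simp
  finally show ?thesis by simp
qed

lemma H_subadditive:
  assumes fin: "finite (set_pmf M)"
  shows "H M (\<lambda>w. (X w, Y w)) \<le> H M X + H M Y"
proof -
  have "H M (\<lambda>w. (X w, Y w, ())) + H M (\<lambda>w. ()) \<le> H M (\<lambda>w. (X w, ())) + H M (\<lambda>w. (Y w, ()))"
    by (rule H_submodular[OF fin])
  moreover have "H M (\<lambda>w. (X w, Y w, ())) = H M (\<lambda>w. (X w, Y w))"
    by (rule H_bijection[OF fin, where h="\<lambda>(a,b). (a,b,())" and g="\<lambda>(a,b,c). (a,b)"]) auto
  moreover have "H M (\<lambda>w. (X w, ())) = H M X"
    by (rule H_bijection[OF fin, where h="\<lambda>a. (a,())" and g="fst"]) auto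
  moreover have "H M (\<lambda>w. (Y w, ())) = H M Y"
    by (rule H_bijection[OF fin, where h="\<lambda>a. (a,())" and g="fst"]) auto
  ultimately show ?thesis by (simp add: H_const)
qed

lemma H_cond_list_le:
  assumes fin: "finite (set_pmf M)"
  shows "H M (\<lambda>w. (map (\<lambda>i. A i w) [0..<n], map (\<lambda>i. B i w) [0..<n])) - H M (\<lambda>w. map (\<lambda>i. B i w) [0..<n])
     \<le> (\<Sum>i<n. H M (\<lambda>w. (A i w, B i w)) - H M (B i))"
proof (induction n)
  case 0 then show ?case by (simp add: H_const)
next
  case (Suc n)
  let ?An = "\<lambda>w. map (\<lambda>i. A i w) [0..<n]"
  let ?Bn = "\<lambda>w. map (\<lambda>i. B i w) [0..<n]"
  let ?a = "A n" let ?b = "B n"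
  have c1: "H M (\<lambda>w. (?An w, (?a w, ?b w), ?Bn w)) + H M ?Bn
      \<le> H M (\<lambda>w. (?An w, ?Bn w)) + H M (\<lambda>w. ((?a w, ?b w), ?Bn w))"
    by (rule H_submodular[OF fin])
  have c2: "H M (\<lambda>w. (?a w, ?Bn w, ?b w)) + H M ?b \<le> H M (\<lambda>w. (?a w, ?b w)) + H M (\<lambda>w. (?Bn w, ?b w))"
    by (rule H_submodular[OF fin])
  have r1: "H M (\<lambda>w. (map (\<lambda>i. A i w) [0..<Suc n], map (\<lambda>i. B i w) [0..<Suc n]))
      = H M (\<lambda>w. (?An w, (?a w, ?b w), ?Bn w))"
    by (rule H_bijection[OF fin, where h="\<lambda>(xs,(x,y),ys). (xs @ [x], ys @ [y])"
          and g="\<lambda>(xs,ys). (butlast xs, (last xs, last ys), butlast ys)"]) auto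
  have r2: "H M (\<lambda>w. map (\<lambda>i. B i w) [0..<Suc n]) = H M (\<lambda>w. (?Bn w, ?b w))"
    by (rule H_bijection[OF fin, where h="\<lambda>(ys,y). ys @ [y]" and g="\<lambda>ys. (butlast ys, last ys)"]) auto
  have r3: "H M (\<lambda>w. ((?a w, ?b w), ?Bn w)) = H M (\<lambda>w. (?a w, ?Bn w, ?b w))"
    by (rule H_bijection[OF fin, where h="\<lambda>(x,ys,y). ((x,y),ys)" and g="\<lambda>((x,y),ys). (x,ys,y)"]) auto
  show ?case using Suc.IH c1 c2 r1 r2 r3 by simp
qed

lemma pmf_bind_pair:
  "pmf (bind_pmf A (\<lambda>a. map_pmf (Pair a) (K a))) (a, b) = pmf A a * pmf (K a) b"
proof -
  have "pmf (bind_pmf A (\<lambda>a. map_pmf (Pair a) (K a))) (a, b)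
      = measure_pmf.expectation A (\<lambda>a'. pmf (map_pmf (Pair a') (K a')) (a, b))"
    by (rule pmf_bind)
  also have "\<dots> = measure_pmf.expectation A (\<lambda>a'. if a' = a then pmf (K a) b else 0)"
  proof (rule expectation_cong)
    fix a' show "pmf (map_pmf (Pair a') (K a')) (a, b) = (if a' = a then pmf (K a) b else 0)"
    proof (cases "a' = a")
      case True
      have "inj (Pair a)" by (rule injI) simp
      then show ?thesis using True pmf_map_inj'[of "Pair a" "K a" b] by simp
    next
      case False
      then have "(a, b) \<notin> set_pmf (map_pmf (Pair a') (K a'))" by auto
      then show ?thesis using False by (simp add: pmf_eq_0_set_pmf)
    qed
  qed
  also have "\<dots> = pmf A a * pmf (K a) b"
    by (subst integral_measure_pmf_real[of "{a}"]) (auto split: if_splits)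
  finally show ?thesis .
qed

lemma set_bind_pair:
  "set_pmf (bind_pmf A (\<lambda>a. map_pmf (Pair a) (K a))) = Sigma (set_pmf A) (\<lambda>a. set_pmf (K a))"
  by auto

lemma ent_chain_rule:
  assumes finA: "finite (set_pmf A)" and finK: "\<And>a. a \<in> set_pmf A \<Longrightarrow> finite (set_pmf (K a))"
  shows "ent (bind_pmf A (\<lambda>a. map_pmf (Pair a) (K a))) = ent A + measure_pmf.expectation A (\<lambda>a. ent (K a))"
proof -
  let ?B = "bind_pmf A (\<lambda>a. map_pmf (Pair a) (K a))"
  have finB: "finite (set_pmf ?B)" unfolding set_bind_pair using finA finK by auto
  have "ent ?B = (\<Sum>u\<in>Sigma (set_pmf A) (\<lambda>a. set_pmf (K a)). pmf ?B u * (- log 2 (pmf ?B u)))"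
    using ent_sum[OF finB] unfolding set_bind_pair .
  also have "\<dots> = (\<Sum>u\<in>Sigma (set_pmf A) (\<lambda>a. set_pmf (K a)). pmf A (fst u) * pmf (K (fst u)) (snd u) * (- log 2 (pmf A (fst u) * pmf (K (fst u)) (snd u))))"
    by (intro sum.cong refl) (clarsimp simp: pmf_bind_pair)
  also have "\<dots> = (\<Sum>a\<in>set_pmf A. \<Sum>b\<in>set_pmf (K a). pmf A a * pmf (K a) b * (- log 2 (pmf A a * pmf (K a) b)))"
    using finA finK by (subst sum.Sigma) (auto simp: split_beta)
  also have "\<dots> = (\<Sum>a\<in>set_pmf A. pmf A a * (- log 2 (pmf A a)) * (\<Sum>b\<in>set_pmf (K a). pmf (K a) b)
      + pmf A a * (\<Sum>b\<in>set_pmf (K a). pmf (K a) b * (- log 2 (pmf (K a) b))))"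
  proof (rule sum.cong[OF refl])
    fix a assume a: "a \<in> set_pmf A"
    have pa: "pmf A a > 0" using a by (simp add: pmf_positive)
    show "(\<Sum>b\<in>set_pmf (K a). pmf A a * pmf (K a) b * (- log 2 (pmf A a * pmf (K a) b)))
      = pmf A a * (- log 2 (pmf A a)) * (\<Sum>b\<in>set_pmf (K a). pmf (K a) b)
      + pmf A a * (\<Sum>b\<in>set_pmf (K a). pmf (K a) b * (- log 2 (pmf (K a) b)))"
      unfolding sum_distrib_left sum.distrib[symmetric]
    proof (rule sum.cong[OF refl])
      fix b assume b: "b \<in> set_pmf (K a)"
      have pb: "pmf (K a) b > 0" using b by (simp add: pmf_positive)
      show "pmf A a * pmf (K a) b * - log 2 (pmf A a * pmf (K a) b) =
         pmf A a * - log 2 (pmf A a) * pmf (K a) b + pmf A a * (pmf (K a) b * - log 2 (pmf (K a) b))"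
        using pa pb by (simp add: log_mult algebra_simps)
    qed
  qed
  also have "\<dots> = (\<Sum>a\<in>set_pmf A. pmf A a * (- log 2 (pmf A a))) + (\<Sum>a\<in>set_pmf A. pmf A a * ent (K a))"
    unfolding sum.distrib using finK by (intro arg_cong2[where f="(+)"] sum.cong refl) (simp_all add: sum_pmf_eq_1 ent_sum)
  also have "\<dots> = ent A + measure_pmf.expectation A (\<lambda>a. ent (K a))"
    using finA by (simp add: ent_sum expectation_finite)
  finally show ?thesis .
qed

lemma pair_as_bind: "pair_pmf A B = bind_pmf A (\<lambda>a. map_pmf (Pair a) B)"
  by (rule pmf_eqI) (auto simp: pmf_pair pmf_bind_pair)

lemma ent_pair:
  assumes "finite (set_pmf A)" "finite (set_pmf B)"
  shows "ent (pair_pmf A B) = ent A + ent B"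
  unfolding pair_as_bind using assms by (subst ent_chain_rule) auto

lemma H_cond_kernel:
  assumes finT: "finite (set_pmf T)" and finK: "\<And>t. t \<in> set_pmf T \<Longrightarrow> finite (set_pmf (K t))"
  shows "H (bind_pmf T (\<lambda>t. map_pmf (Pair t) (K t))) (\<lambda>v. v) - H (bind_pmf T (\<lambda>t. map_pmf (Pair t) (K t))) fst
    = measure_pmf.expectation T (\<lambda>t. ent (K t))"
proof -
  have "map_pmf fst (bind_pmf T (\<lambda>t. map_pmf (Pair t) (K t))) = T"
    by (simp add: map_bind_pmf map_pmf_comp bind_return_pmf')
  then show ?thesis unfolding H_id using ent_chain_rule[OF finT finK] by (simp add: H_def)
qed

fun indep_pmf :: "'a pmf list \<Rightarrow> 'a list pmf" where
  "indep_pmf [] = return_pmf []"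
| "indep_pmf (p # ps) = bind_pmf p (\<lambda>x. map_pmf (Cons x) (indep_pmf ps))"

lemma indep_pmf_Cons: "indep_pmf (p # ps) = map_pmf (\<lambda>(x, xs). x # xs) (pair_pmf p (indep_pmf ps))"
  unfolding pair_as_bind by (simp add: map_bind_pmf map_pmf_comp)

lemma set_indep_pmf: "set_pmf (indep_pmf ps) = {xs. list_all2 (\<lambda>x p. x \<in> set_pmf p) xs ps}"
proof (induction ps)
  case Nil then show ?case by auto
next
  case (Cons p ps)
  show ?case
  proof
    show "set_pmf (indep_pmf (p # ps)) \<subseteq> {xs. list_all2 (\<lambda>x p. x \<in> set_pmf p) xs (p # ps)}"
      using Cons by auto
    show "{xs. list_all2 (\<lambda>x p. x \<in> set_pmf p) xs (p # ps)} \<subseteq> set_pmf (indep_pmf (p # ps))"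
    proof
      fix xs assume "xs \<in> {xs. list_all2 (\<lambda>x p. x \<in> set_pmf p) xs (p # ps)}"
      then obtain y ys where "xs = y # ys" "y \<in> set_pmf p" "list_all2 (\<lambda>x p. x \<in> set_pmf p) ys ps"
        by (auto simp: list_all2_Cons2)
      then show "xs \<in> set_pmf (indep_pmf (p # ps))" using Cons by auto
    qed
  qed
qed

lemma length_indep_pmf: "xs \<in> set_pmf (indep_pmf ps) \<Longrightarrow> length xs = length ps"
  unfolding set_indep_pmf by (simp add: list_all2_lengthD)

lemma finite_indep_pmf: "(\<And>p. p \<in> set ps \<Longrightarrow> finite (set_pmf p)) \<Longrightarrow> finite (set_pmf (indep_pmf ps))"
proof (induction ps)
  case Nil then show ?case by simp
next
  case (Cons p ps)
  then show ?case by (simp add: indep_pmf_Cons)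
qed

lemma inj_Cons_pair: "inj (\<lambda>(x, xs). x # xs)"
  by (rule injI) auto

lemma pmf_indep_pmf: "pmf (indep_pmf ps) xs = (if length xs = length ps then (\<Prod>i<length ps. pmf (ps ! i) (xs ! i)) else 0)"
proof (induction ps arbitrary: xs)
  case Nil then show ?case by (simp add: pmf_return)
next
  case (Cons p ps)
  show ?case
  proof (cases xs)
    case Nil
    then have "xs \<notin> set_pmf (indep_pmf (p # ps))" using length_indep_pmf by fastforce
    then show ?thesis using Nil by (simp add: pmf_eq_0_set_pmf)
  next
    case (Cons y ys)
    have "pmf (indep_pmf (p # ps)) xs = pmf (pair_pmf p (indep_pmf ps)) (y, ys)"
      unfolding indep_pmf_Cons Cons using pmf_map_inj'[OF inj_Cons_pair, of _ "(y, ys)"] by simp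
    also have "\<dots> = pmf p y * pmf (indep_pmf ps) ys" by (rule pmf_pair)
    finally show ?thesis using Cons.IH[of ys] Cons by (simp del: prod.lessThan_Suc add: prod.lessThan_Suc_shift)
  qed
qed

lemma ent_indep_pmf: "(\<And>p. p \<in> set ps \<Longrightarrow> finite (set_pmf p)) \<Longrightarrow> ent (indep_pmf ps) = (\<Sum>i<length ps. ent (ps ! i))"
proof (induction ps)
  case Nil then show ?case by (simp add: ent_return)
next
  case (Cons p ps)
  have fin: "finite (set_pmf (pair_pmf p (indep_pmf ps)))" using Cons.prems finite_indep_pmf by auto
  have "ent (indep_pmf (p # ps)) = ent (pair_pmf p (indep_pmf ps))"
    unfolding indep_pmf_Cons by (rule ent_map_inj) (simp add: inj_on_def)
  also have "\<dots> = ent p + ent (indep_pmf ps)" using Cons.prems finite_indep_pmf by (intro ent_pair) auto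
  finally show ?case using Cons by (simp del: sum.lessThan_Suc add: sum.lessThan_Suc_shift)
qed

lemma nth_indep_pmf: "i < length ps \<Longrightarrow> map_pmf (\<lambda>xs. xs ! i) (indep_pmf ps) = ps ! i"
proof (induction ps arbitrary: i)
  case Nil then show ?case by simp
next
  case (Cons p ps)
  show ?case
  proof (cases i)
    case 0
    have "map_pmf (\<lambda>xs. xs ! i) (indep_pmf (p # ps)) = map_pmf fst (pair_pmf p (indep_pmf ps))"
      unfolding indep_pmf_Cons map_pmf_comp using 0 by (intro map_pmf_cong) auto
    then show ?thesis using 0 by (simp add: map_fst_pair_pmf)
  next
    case (Suc j)
    have "map_pmf (\<lambda>xs. xs ! i) (indep_pmf (p # ps)) = map_pmf (\<lambda>xs. xs ! j) (map_pmf snd (pair_pmf p (indep_pmf ps)))"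
      unfolding indep_pmf_Cons map_pmf_comp using Suc by (intro map_pmf_cong) auto
    then show ?thesis using Suc Cons by (simp add: map_snd_pair_pmf)
  qed
qed

lemma marg_pmf: "marg (pmf (P :: 'w::finite pmf)) f v = pmf (map_pmf f P) v"
  unfolding marg_def pmf_map by (simp add: measure_measure_pmf_finite vimage_def)

lemma cond_mi_H:
  fixes P :: "'w::finite pmf" and X :: "'w \<Rightarrow> 'a" and Y :: "'w \<Rightarrow> 'b" and Z :: "'w \<Rightarrow> 'c"
  shows "cond_mi (pmf P) X Y Z = H P (\<lambda>w. (X w, Z w)) + H P (\<lambda>w. (Y w, Z w)) - H P (\<lambda>w. (X w, Y w, Z w)) - H P Z"
proof -
  have fin: "finite (set_pmf P)" by simp
  let ?V = "\<lambda>w. (X w, Y w, Z w)"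
  define pV where "pV = pmf (map_pmf ?V P)"
  define pXZ where "pXZ = pmf (map_pmf (\<lambda>w. (X w, Z w)) P)"
  define pYZ where "pYZ = pmf (map_pmf (\<lambda>w. (Y w, Z w)) P)"
  define pZ where "pZ = pmf (map_pmf Z P)"
  define F where "F = (\<lambda>(x,y,z). if pV (x,y,z) = 0 then 0 else pV (x,y,z) * log 2 (pV (x,y,z) * pZ z / (pXZ (x,z) * pYZ (y,z))))"
  define G where "G = (\<lambda>(x,y,z). log 2 (pV (x,y,z) * pZ z / (pXZ (x,z) * pYZ (y,z))))"
  have pos: "pV (?V w) > 0" "pXZ (X w, Z w) > 0" "pYZ (Y w, Z w) > 0" "pZ (Z w) > 0" if "w \<in> set_pmf P" for w
    unfolding pV_def pXZ_def pYZ_def pZ_def using pmf_map_image_pos[OF that] by auto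
  have "cond_mi (pmf P) X Y Z = (\<Sum>x\<in>range X. \<Sum>y\<in>range Y. \<Sum>z\<in>range Z. F (x,y,z))"
    unfolding cond_mi_def marg_pmf F_def pV_def pXZ_def pYZ_def pZ_def Let_def by simp
  also have "\<dots> = (\<Sum>v\<in>range X \<times> range Y \<times> range Z. F v)"
    by (simp add: sum.cartesian_product split_beta)
  also have "\<dots> = (\<Sum>v\<in>set_pmf (map_pmf ?V P). F v)"
  proof (rule sum.mono_neutral_right)
    show "finite (range X \<times> range Y \<times> range Z)" by simp
    show "set_pmf (map_pmf ?V P) \<subseteq> range X \<times> range Y \<times> range Z" by auto
    show "\<forall>v\<in>range X \<times> range Y \<times> range Z - set_pmf (map_pmf ?V P). F v = 0"
      by (auto simp: F_def pV_def pmf_eq_0_set_pmf split: prod.splits)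
  qed
  also have "\<dots> = (\<Sum>v\<in>set_pmf (map_pmf ?V P). pmf (map_pmf ?V P) v * G v)"
    by (intro sum.cong refl) (auto simp: F_def G_def pV_def)
  also have "\<dots> = measure_pmf.expectation (map_pmf ?V P) G"
    by (rule expectation_finite[symmetric]) simp
  also have "\<dots> = measure_pmf.expectation P (\<lambda>w. ((log 2 (pV (?V w)) + log 2 (pZ (Z w))) - log 2 (pXZ (X w, Z w))) - log 2 (pYZ (Y w, Z w)))"
    unfolding integral_map_pmf
  proof (rule expectation_cong)
    fix w assume w: "w \<in> set_pmf P"
    show "G (?V w) = ((log 2 (pV (?V w)) + log 2 (pZ (Z w))) - log 2 (pXZ (X w, Z w))) - log 2 (pYZ (Y w, Z w))"
      using pos[OF w] by (simp add: G_def log_divide log_mult)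
  qed
  also have "\<dots> = H P (\<lambda>w. (X w, Z w)) + H P (\<lambda>w. (Y w, Z w)) - H P ?V - H P Z"
    unfolding expectation_diff[OF fin] expectation_add[OF fin] H_expectation pV_def pXZ_def pYZ_def pZ_def by simp
  finally show ?thesis .
qed

text \<open>Let \<open>T\<close> be uniform on \<open>{..<n}\<close> and \<open>V\<close> have law \<open>L T\<close> given \<open>T\<close>.
  Conditioning on the extra variable \<open>T\<close> can only decrease conditional entropy, so
  the average of \<open>H(A|B)\<close> over the components is at most \<open>H(A|B)\<close> of the mixture.\<close>

lemma set_pmf_of_lessThan: "(n::nat) > 0 \<Longrightarrow> set_pmf (pmf_of_set {..<n}) = {..<n}"
  by (subst set_pmf_of_set) auto

lemma expectation_pmf_of_lessThan: "(n::nat) > 0 \<Longrightarrow> measure_pmf.expectation (pmf_of_set {..<n}) f = (\<Sum>i<n. f i) / (n::real)"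
  by (subst integral_pmf_of_set) auto

lemma ent_time_sharing:
  assumes n: "(n::nat) > 0" and fin: "\<And>i. i < n \<Longrightarrow> finite (set_pmf (K i))"
  shows "ent (bind_pmf (pmf_of_set {..<n}) (\<lambda>i. map_pmf (Pair i) (K i))) = log 2 n + (\<Sum>i<n. ent (K i)) / n"
proof -
  have ne: "{..<n} \<noteq> {}" using n by auto
  show ?thesis
    using n fin by (subst ent_chain_rule) (auto simp: ent_unif expectation_pmf_of_lessThan ne set_pmf_of_lessThan)
qed

lemma time_sharing_map: "map_pmf (\<lambda>u. (fst u, f (snd u))) (bind_pmf A (\<lambda>i. map_pmf (Pair i) (L i)))
   = bind_pmf A (\<lambda>i. map_pmf (Pair i) (map_pmf f (L i)))"
  by (simp add: map_bind_pmf map_pmf_comp)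

lemma time_sharing_snd: "map_pmf snd (bind_pmf A (\<lambda>i. map_pmf (Pair i) (L i))) = bind_pmf A L"
  by (simp add: map_bind_pmf map_pmf_comp)

lemma time_sharing_cond_le:
  fixes L :: "nat \<Rightarrow> 'v pmf" and n :: nat
  assumes n: "n > 0" and fin: "\<And>i. i < n \<Longrightarrow> finite (set_pmf (L i))"
  shows "(\<Sum>i<n. H (L i) (\<lambda>v. (A v, B v)) - H (L i) B) / n
     \<le> H (bind_pmf (pmf_of_set {..<n}) L) (\<lambda>v. (A v, B v)) - H (bind_pmf (pmf_of_set {..<n}) L) B"
proof -
  define TS where "TS = bind_pmf (pmf_of_set {..<n}) (\<lambda>i. map_pmf (Pair i) (L i))"
  have ne: "{..<n} \<noteq> {}" using n by auto
  have finTS: "finite (set_pmf TS)" unfolding TS_def using fin n by (auto simp: set_pmf_of_lessThan)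
  have Hts: "H TS (\<lambda>u. (fst u, f (snd u))) = log 2 n + (\<Sum>i<n. H (L i) f) / n" for f :: "'v \<Rightarrow> 'z"
    unfolding H_def TS_def time_sharing_map using n fin by (subst ent_time_sharing) (auto simp: H_def)
  have Hsnd: "H TS (\<lambda>u. f (snd u)) = H (bind_pmf (pmf_of_set {..<n}) L) f" for f :: "'v \<Rightarrow> 'z"
    unfolding H_comp TS_def time_sharing_snd ..
  have c: "H TS (\<lambda>u. (A (snd u), fst u, B (snd u))) + H TS (\<lambda>u. B (snd u))
      \<le> H TS (\<lambda>u. (A (snd u), B (snd u))) + H TS (\<lambda>u. (fst u, B (snd u)))"
    by (rule H_submodular[OF finTS])
  have r: "H TS (\<lambda>u. (A (snd u), fst u, B (snd u))) = H TS (\<lambda>u. (fst u, (A (snd u), B (snd u))))"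
    by (rule H_bijection[OF finTS, where h="\<lambda>(i,a,b). (a,i,b)" and g="\<lambda>(a,i,b). (i,a,b)"]) auto
  have e1: "H TS (\<lambda>u. (fst u, (A (snd u), B (snd u)))) = log 2 n + (\<Sum>i<n. H (L i) (\<lambda>v. (A v, B v))) / n"
    using Hts[of "\<lambda>v. (A v, B v)"] by simp
  have e2: "H TS (\<lambda>u. (fst u, B (snd u))) = log 2 n + (\<Sum>i<n. H (L i) B) / n"
    using Hts[of B] by simp
  have e3: "H TS (\<lambda>u. (A (snd u), B (snd u))) = H (bind_pmf (pmf_of_set {..<n}) L) (\<lambda>v. (A v, B v))"
    using Hsnd[of "\<lambda>v. (A v, B v)"] by simp
  have e4: "H TS (\<lambda>u. B (snd u)) = H (bind_pmf (pmf_of_set {..<n}) L) B"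
    using Hsnd[of B] by simp
  have "(\<Sum>i<n. H (L i) (\<lambda>v. (A v, B v)) - H (L i) B) / n = (\<Sum>i<n. H (L i) (\<lambda>v. (A v, B v))) / n - (\<Sum>i<n. H (L i) B) / n"
    by (simp add: sum_subtractf diff_divide_distrib)
  then show ?thesis using c r e1 e2 e3 e4 by linarith
qed

lemma disintegrate_product_marginal:
  fixes T :: "('s::finite \<times> 'a::finite \<times> 'b::finite) pmf"
  assumes marg: "map_pmf (\<lambda>t. (fst t, fst (snd t))) T = pair_pmf Q p1"
  shows "\<exists>p2. \<forall>s a b. pmf T (s, a, b) = pmf Q s * pmf p1 a * pmf (p2 a s) b"
proof -
  define C :: "'s \<Rightarrow> 'a \<Rightarrow> ('s \<times> 'a \<times> 'b) set" where "C = (\<lambda>s a. {t. fst t = s \<and> fst (snd t) = a})"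
  define p2 where "p2 = (\<lambda>a s. if pmf Q s * pmf p1 a = 0 then return_pmf undefined
       else map_pmf (\<lambda>t. snd (snd t)) (cond_pmf T (C s a)))"
  have mC: "measure_pmf.prob T (C s a) = pmf Q s * pmf p1 a" for s a
  proof -
    have "pmf Q s * pmf p1 a = pmf (map_pmf (\<lambda>t. (fst t, fst (snd t))) T) (s, a)"
      unfolding marg by (simp add: pmf_pair)
    also have "\<dots> = measure_pmf.prob T (C s a)"
      unfolding pmf_map C_def by (simp add: vimage_def)
    finally show ?thesis by simp
  qed
  have "pmf T (s, a, b) = pmf Q s * pmf p1 a * pmf (p2 a s) b" for s a b
  proof (cases "pmf Q s * pmf p1 a = 0")
    case True
    have "pmf T (s, a, b) \<le> measure_pmf.prob T (C s a)"
      unfolding measure_pmf_single[symmetric] C_def by (intro measure_pmf.finite_measure_mono) auto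
    then have "pmf T (s, a, b) = 0" using True mC[of s a] pmf_nonneg[of T "(s,a,b)"] by simp
    then show ?thesis using True by simp
  next
    case False
    then have pos: "measure_pmf.prob T (C s a) \<noteq> 0" using mC by simp
    then have ne: "set_pmf T \<inter> C s a \<noteq> {}" using measure_pmf_zero_iff by blast
    have "pmf (p2 a s) b = measure_pmf.prob (cond_pmf T (C s a)) ((\<lambda>t. snd (snd t)) -` {b})"
      using False by (simp add: p2_def pmf_map)
    also have "\<dots> = (\<Sum>t\<in>(\<lambda>t. snd (snd t)) -` {b}. pmf (cond_pmf T (C s a)) t)"
      by (simp add: measure_measure_pmf_finite)
    also have "\<dots> = (\<Sum>t\<in>(\<lambda>t. snd (snd t)) -` {b}.
        if t = (s, a, b) then pmf T (s, a, b) / measure_pmf.prob T (C s a) else 0)"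
      unfolding pmf_cond[OF ne] by (intro sum.cong refl) (auto simp: C_def)
    also have "\<dots> = pmf T (s, a, b) / measure_pmf.prob T (C s a)"
      by (subst sum.delta) auto
    finally show ?thesis using pos mC[of s a] by (simp add: field_simps)
  qed
  then show ?thesis by blast
qed

text \<open>Single-letter joint laws.  A channel input letter is a triple \<open>(s, x1, x2)\<close>;
  \<open>flatten\<close> identifies (input letter, output) with the quadruples of \<open>joint\<close>.\<close>

definition chan_kernel :: "('x1 \<Rightarrow> 'x2 \<Rightarrow> 's \<Rightarrow> 'y pmf) \<Rightarrow> 's \<times> 'x1 \<times> 'x2 \<Rightarrow> 'y pmf" where
  "chan_kernel W t = W (fst (snd t)) (snd (snd t)) (fst t)"

definition flatten :: "('s \<times> 'x1 \<times> 'x2) \<times> 'y \<Rightarrow> 's \<times> 'x1 \<times> 'x2 \<times> 'y" where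
  "flatten v = (fst (fst v), fst (snd (fst v)), snd (snd (fst v)), snd v)"

lemma inj_flatten: "inj flatten"
  by (rule injI) (auto simp: flatten_def prod_eq_iff)

lemma joint_of_input_law:
  fixes T :: "('s::finite \<times> 'x1::finite \<times> 'x2::finite) pmf" and W :: "'x1 \<Rightarrow> 'x2 \<Rightarrow> 's \<Rightarrow> 'y::finite pmf"
  assumes marg: "map_pmf (\<lambda>t. (fst t, fst (snd t))) T = pair_pmf Q p1"
  shows "\<exists>p2. pmf (map_pmf flatten (bind_pmf T (\<lambda>t. map_pmf (Pair t) (chan_kernel W t)))) = joint Q p1 p2 W"
proof -
  obtain p2 where p2: "\<And>s a b. pmf T (s, a, b) = pmf Q s * pmf p1 a * pmf (p2 a s) b"
    using disintegrate_product_marginal[OF marg] by blast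
  have eq: "pmf (map_pmf flatten (bind_pmf T (\<lambda>t. map_pmf (Pair t) (chan_kernel W t)))) (s, a, b, y)
      = joint Q p1 p2 W (s, a, b, y)" for s a b y
  proof -
    have "pmf (map_pmf flatten (bind_pmf T (\<lambda>t. map_pmf (Pair t) (chan_kernel W t)))) (flatten ((s,a,b),y))
       = pmf (bind_pmf T (\<lambda>t. map_pmf (Pair t) (chan_kernel W t))) ((s,a,b),y)"
      by (rule pmf_map_inj'[OF inj_flatten])
    also have "\<dots> = pmf T (s,a,b) * pmf (W a b s) y" by (simp add: pmf_bind_pair chan_kernel_def)
    finally show ?thesis by (simp add: flatten_def joint_def p2)
  qed
  show ?thesis
  proof (intro exI ext)
    fix v :: "'s \<times> 'x1 \<times> 'x2 \<times> 'y"
    obtain s a b y where "v = (s, a, b, y)" by (cases v) auto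
    then show "pmf (map_pmf flatten (bind_pmf T (\<lambda>t. map_pmf (Pair t) (chan_kernel W t)))) v
        = joint Q p1 p2 W v" using eq by simp
  qed
qed

text \<open>The two single-letter quantities of the outer region, written with entropies of
  a law on (input letter, output): \<open>info_private = I(X1; Y | S, X2)\<close> and
  \<open>info_sum = I(X1, X2; Y | S) - I(X1; S | Y)\<close>.  The term \<open>H(Y)\<close> is written as \<open>H(Y, ())\<close>
  so that it is a conditional entropy with trivial condition, as in the time-sharing bound.\<close>

definition info_private :: "(('s \<times> 'x1 \<times> 'x2) \<times> 'y) pmf \<Rightarrow> real" where
  "info_private P = (H P (\<lambda>v. (snd v, (fst (fst v), snd (snd (fst v))))) - H P (\<lambda>v. (fst (fst v), snd (snd (fst v)))))
      - (H P (\<lambda>v. v) - H P fst)"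

definition info_sum :: "(('s \<times> 'x1 \<times> 'x2) \<times> 'y) pmf \<Rightarrow> real" where
  "info_sum P = H P (\<lambda>v. (snd v, ())) - H P (\<lambda>v. fst (fst v))
      + (H P (\<lambda>v. (fst (fst v), (fst (snd (fst v)), snd v))) - H P (\<lambda>v. (fst (snd (fst v)), snd v)))
      - (H P (\<lambda>v. v) - H P fst)"

lemma H_flatten: "H (map_pmf flatten P) f = H P (\<lambda>v. f (flatten v))"
  by (simp add: H_comp)

lemma cond_mi_info_private:
  fixes P :: "(('s::finite \<times> 'x1::finite \<times> 'x2::finite) \<times> 'y::finite) pmf"
  shows "cond_mi (pmf (map_pmf flatten P)) vX1 vY (\<lambda>w. (vS w, vX2 w)) = info_private P"
proof -
  have fin: "finite (set_pmf P)" by (rule finite_set_pmf)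
  have r1: "H P (\<lambda>v. v) = H P (\<lambda>v. (fst (snd (fst v)), snd v, (fst (fst v), snd (snd (fst v)))))"
    by (rule H_bijection[OF fin, where h="\<lambda>(a,y,(s,b)). ((s,a,b),y)" and g="\<lambda>((s,a,b),y). (a,y,(s,b))"]) auto
  have r2: "H P fst = H P (\<lambda>v. (fst (snd (fst v)), (fst (fst v), snd (snd (fst v)))))"
    by (rule H_bijection[OF fin, where h="\<lambda>(a,(s,b)). (s,a,b)" and g="\<lambda>(s,a,b). (a,(s,b))"]) auto
  show ?thesis unfolding cond_mi_H H_flatten info_private_def r1 r2
    by (simp add: flatten_def vS_def vX1_def vX2_def vY_def)
qed

lemma cond_mi_info_sum:
  fixes P :: "(('s::finite \<times> 'x1::finite \<times> 'x2::finite) \<times> 'y::finite) pmf"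
  shows "cond_mi (pmf (map_pmf flatten P)) (\<lambda>w. (vX1 w, vX2 w)) vY vS - cond_mi (pmf (map_pmf flatten P)) vX1 vS vY = info_sum P"
proof -
  have fin: "finite (set_pmf P)" by (rule finite_set_pmf)
  have r1: "H P (\<lambda>v. v) = H P (\<lambda>v. ((fst (snd (fst v)), snd (snd (fst v))), snd v, fst (fst v)))"
    by (rule H_bijection[OF fin, where h="\<lambda>((a,b),y,s). ((s,a,b),y)" and g="\<lambda>((s,a,b),y). ((a,b),y,s)"]) auto
  have r2: "H P fst = H P (\<lambda>v. ((fst (snd (fst v)), snd (snd (fst v))), fst (fst v)))"
    by (rule H_bijection[OF fin, where h="\<lambda>((a,b),s). (s,a,b)" and g="\<lambda>(s,a,b). ((a,b),s)"]) auto
  have r3: "H P (\<lambda>v. (snd v, ())) = H P snd"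
    by (rule H_bijection[OF fin, where h="\<lambda>y. (y,())" and g="fst"]) auto
  have r4: "H P (\<lambda>v. (fst (fst v), (fst (snd (fst v)), snd v))) = H P (\<lambda>v. (fst (snd (fst v)), fst (fst v), snd v))"
    by (rule H_bijection[OF fin, where h="\<lambda>(a,s,y). (s,(a,y))" and g="\<lambda>(s,(a,y)). (a,s,y)"]) auto
  have r5: "H P (\<lambda>v. (snd v, fst (fst v))) = H P (\<lambda>v. (fst (fst v), snd v))"
    by (rule H_bijection[OF fin, where h="\<lambda>(s,y). (y,s)" and g="\<lambda>(y,s). (s,y)"]) auto
  show ?thesis unfolding cond_mi_H H_flatten info_sum_def r1 r2 r3 r4
    using r5 by (simp add: flatten_def vS_def vX1_def vX2_def vY_def)
qed

lemma map_nth_len: "length xs = n \<Longrightarrow> map (\<lambda>i. xs ! i) [0..<n] = xs"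
  by (simp add: list_eq_iff_nth_eq)

lemma map_fst_nth: "length xs = n \<Longrightarrow> map (fst \<circ> (\<lambda>i. (xs ! i, f i))) [0..<n] = xs"
  by (simp add: list_eq_iff_nth_eq)

lemma map_snd_nth: "length xs = n \<Longrightarrow> map (snd \<circ> (\<lambda>i. (f i, xs ! i))) [0..<n] = xs"
  by (simp add: list_eq_iff_nth_eq)

lemma zip_map_upt: "length s = n \<Longrightarrow> zip s (map f [0..<n]) = map (\<lambda>i. (s ! i, f i)) [0..<n]"
  by (simp add: list_eq_iff_nth_eq)

lemma zip_map_upt2: "length s = n \<Longrightarrow> zip (map f [0..<n]) s = map (\<lambda>i. (f i, s ! i)) [0..<n]"
  by (simp add: list_eq_iff_nth_eq)

lemma finite_seqs: "finite (seqs n :: 'a::finite list set)"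
proof -
  have "seqs n = {xs :: 'a list. set xs \<subseteq> UNIV \<and> length xs = n}" by (simp add: seqs_def)
  then show ?thesis using finite_lists_length_eq[of "UNIV :: 'a set" n] by simp
qed

lemma sum_prod_split: "(\<Sum>\<omega>\<in>X \<times> D. f \<omega>) = (\<Sum>x\<in>X. \<Sum>d\<in>D. f (x, d))"
  by (simp add: sum.cartesian_product)

lemma sum4: "(\<Sum>\<omega>\<in>((A \<times> B) \<times> C) \<times> D. f \<omega>) = (\<Sum>a\<in>A. \<Sum>b\<in>B. \<Sum>c\<in>C. \<Sum>d\<in>D. f (((a, b), c), d))"
  by (simp only: sum_prod_split)

text \<open>The probability space of a code of blocklength \<open>n\<close> with message sets
  \<open>{1..Mc} \<times> {1..M1}\<close>: uniform messages, an independent i.i.d. state sequence, and the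
  memoryless channel output.  \<open>letter_pmf i\<close> is the law of the \<open>i\<close>-th (input letter, output)
  pair, where the input letter is \<open>(S\<^sub>i, X\<^sub>1\<^sub>i, X\<^sub>2\<^sub>i)\<close>.\<close>

locale code_distribution =
  fixes Q :: "'s::finite pmf" and W :: "'x1::finite \<Rightarrow> 'x2::finite \<Rightarrow> 's \<Rightarrow> 'y::finite pmf"
    and n :: nat and Mc :: nat and M1 :: nat
    and phi1 :: "nat \<Rightarrow> nat \<Rightarrow> 'x1 list" and phi2 :: "'s list \<Rightarrow> nat \<Rightarrow> 'x2 list"
    and psi :: "'y list \<Rightarrow> nat \<times> nat"
  assumes n_pos: "n > 0" and Mc: "Mc \<ge> 1" and M1: "M1 \<ge> 1"
begin

definition "msg_pmf = pair_pmf (pmf_of_set {1..Mc}) (pmf_of_set {1..M1})"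
definition "state_pmf = indep_pmf (replicate n Q)"
definition "msg_state_pmf = pair_pmf msg_pmf state_pmf"
definition "x1 w i = phi1 (fst w) (snd w) ! i"
definition "x2 w s i = phi2 s (fst w) ! i"
definition "letter_input i ws = (snd ws ! i, x1 (fst ws) i, x2 (fst ws) (snd ws) i)"
definition "out_pmf ws = indep_pmf (map (\<lambda>i. chan_kernel W (letter_input i ws)) [0..<n])"
definition "code_pmf = bind_pmf msg_state_pmf (\<lambda>ws. map_pmf (Pair ws) (out_pmf ws))"
definition "letter_pmf i = bind_pmf (map_pmf (letter_input i) msg_state_pmf) (\<lambda>t. map_pmf (Pair t) (chan_kernel W t))"

lemma msg_sets_nonempty: "{1..Mc} \<noteq> {}" "{1..M1} \<noteq> {}" using Mc M1 by auto

lemma set_msg_pmf: "set_pmf msg_pmf = {1..Mc} \<times> {1..M1}"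
  unfolding msg_pmf_def using msg_sets_nonempty by simp

lemma finite_msg_pmf: "finite (set_pmf msg_pmf)" by (simp add: set_msg_pmf)

lemma finite_state_pmf: "finite (set_pmf state_pmf)"
  unfolding state_pmf_def by (rule finite_indep_pmf) (auto simp: finite_set_pmf)

lemma finite_msg_state_pmf: "finite (set_pmf msg_state_pmf)"
  unfolding msg_state_pmf_def using finite_msg_pmf finite_state_pmf by simp

lemma finite_out_pmf: "finite (set_pmf (out_pmf ws))"
  unfolding out_pmf_def by (rule finite_indep_pmf) (auto simp: finite_set_pmf)

lemma finite_code_pmf: "finite (set_pmf code_pmf)"
  unfolding code_pmf_def using finite_msg_state_pmf finite_out_pmf by auto

lemma finite_letter_pmf: "finite (set_pmf (letter_pmf i))"
  unfolding letter_pmf_def using finite_msg_state_pmf by (auto simp: finite_set_pmf)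

lemma set_code_pmf:
  assumes "\<omega> \<in> set_pmf code_pmf"
  shows "fst (fst \<omega>) \<in> {1..Mc} \<times> {1..M1}" "length (snd (fst \<omega>)) = n" "length (snd \<omega>) = n"
proof -
  obtain ws y where o: "\<omega> = (ws, y)" "ws \<in> set_pmf msg_state_pmf" "y \<in> set_pmf (out_pmf ws)"
    using assms unfolding code_pmf_def by auto
  have "fst ws \<in> set_pmf msg_pmf" "snd ws \<in> set_pmf state_pmf" using o(2) unfolding msg_state_pmf_def by auto
  then show "fst (fst \<omega>) \<in> {1..Mc} \<times> {1..M1}" "length (snd (fst \<omega>)) = n"
    using o(1) length_indep_pmf[of "snd ws" "replicate n Q"] by (auto simp: set_msg_pmf state_pmf_def)
  show "length (snd \<omega>) = n" using o length_indep_pmf[of y] by (simp add: out_pmf_def)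
qed

lemma map_fst_code_pmf: "map_pmf fst code_pmf = msg_state_pmf"
  unfolding code_pmf_def by (simp add: map_bind_pmf map_pmf_comp bind_return_pmf')

lemma letter_pmf_eq: "i < n \<Longrightarrow> letter_pmf i = map_pmf (\<lambda>\<omega>. (letter_input i (fst \<omega>), snd \<omega> ! i)) code_pmf"
proof -
  assume i: "i < n"
  have "map_pmf (\<lambda>\<omega>. (letter_input i (fst \<omega>), snd \<omega> ! i)) code_pmf
      = bind_pmf msg_state_pmf (\<lambda>ws. map_pmf (Pair (letter_input i ws)) (map_pmf (\<lambda>y. y ! i) (out_pmf ws)))"
    unfolding code_pmf_def by (simp add: map_bind_pmf map_pmf_comp)
  also have "\<dots> = bind_pmf msg_state_pmf (\<lambda>ws. map_pmf (Pair (letter_input i ws)) (chan_kernel W (letter_input i ws)))"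
    unfolding out_pmf_def using i by (subst nth_indep_pmf) auto
  also have "\<dots> = letter_pmf i" unfolding letter_pmf_def by (simp add: bind_map_pmf)
  finally show ?thesis by simp
qed

lemma ent_msg_pmf: "ent msg_pmf = log 2 Mc + log 2 M1"
  unfolding msg_pmf_def using msg_sets_nonempty Mc M1 by (simp add: ent_pair ent_unif log_mult)

lemma ent_state_pmf: "ent state_pmf = n * ent Q"
  unfolding state_pmf_def by (subst ent_indep_pmf) (auto simp: finite_set_pmf)

lemma ent_msg_state_pmf: "ent msg_state_pmf = log 2 Mc + log 2 M1 + n * ent Q"
  unfolding msg_state_pmf_def using finite_msg_pmf finite_state_pmf by (simp add: ent_pair ent_msg_pmf ent_state_pmf)

lemma H_code_pmf_fst: "H code_pmf fst = ent msg_state_pmf"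
  unfolding H_def map_fst_code_pmf ..

lemma H_code_pmf_msg: "H code_pmf (\<lambda>\<omega>. fst (fst \<omega>)) = log 2 Mc + log 2 M1"
proof -
  have "H code_pmf (\<lambda>\<omega>. fst (fst \<omega>)) = ent (map_pmf fst (map_pmf fst code_pmf))"
    unfolding H_def by (simp add: map_pmf_comp)
  then show ?thesis unfolding map_fst_code_pmf msg_state_pmf_def map_fst_pair_pmf ent_msg_pmf .
qed

lemma H_code_pmf_state: "H code_pmf (\<lambda>\<omega>. snd (fst \<omega>)) = n * ent Q"
proof -
  have "H code_pmf (\<lambda>\<omega>. snd (fst \<omega>)) = ent (map_pmf snd (map_pmf fst code_pmf))"
    unfolding H_def by (simp add: map_pmf_comp)
  then show ?thesis unfolding map_fst_code_pmf msg_state_pmf_def map_snd_pair_pmf ent_state_pmf .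
qed

lemma H_code_pmf_common_state: "H code_pmf (\<lambda>\<omega>. (fst (fst (fst \<omega>)), snd (fst \<omega>))) = log 2 Mc + n * ent Q"
proof -
  have "H code_pmf (\<lambda>\<omega>. (fst (fst (fst \<omega>)), snd (fst \<omega>))) = ent (map_pmf (\<lambda>(a, b). (fst a, b)) (map_pmf fst code_pmf))"
    unfolding H_def by (simp add: map_pmf_comp split_beta)
  also have "\<dots> = ent (pair_pmf (pmf_of_set {1..Mc}) state_pmf)"
    unfolding map_fst_code_pmf msg_state_pmf_def using map_pair[of fst "\<lambda>x. x" msg_pmf state_pmf]
    by (simp add: msg_pmf_def map_fst_pair_pmf)
  also have "\<dots> = log 2 Mc + n * ent Q"
    using msg_sets_nonempty finite_state_pmf by (simp add: ent_pair ent_unif ent_state_pmf)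
  finally show ?thesis .
qed

lemma H_cond_out_letters: "H code_pmf (\<lambda>v. v) - H code_pmf fst = (\<Sum>i<n. H (letter_pmf i) (\<lambda>v. v) - H (letter_pmf i) fst)"
proof -
  have "H code_pmf (\<lambda>v. v) - H code_pmf fst = measure_pmf.expectation msg_state_pmf (\<lambda>ws. ent (out_pmf ws))"
    unfolding code_pmf_def by (rule H_cond_kernel[OF finite_msg_state_pmf finite_out_pmf])
  also have "\<dots> = measure_pmf.expectation msg_state_pmf (\<lambda>ws. \<Sum>i<n. ent (chan_kernel W (letter_input i ws)))"
    unfolding out_pmf_def by (intro expectation_cong) (simp add: ent_indep_pmf finite_set_pmf)
  also have "\<dots> = (\<Sum>i<n. measure_pmf.expectation msg_state_pmf (\<lambda>ws. ent (chan_kernel W (letter_input i ws))))"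
    by (rule Bochner_Integration.integral_sum) (simp add: integrable_measure_pmf_finite finite_msg_state_pmf)
  also have "\<dots> = (\<Sum>i<n. H (letter_pmf i) (\<lambda>v. v) - H (letter_pmf i) fst)"
  proof (rule sum.cong[OF refl])
    fix i
    have "H (letter_pmf i) (\<lambda>v. v) - H (letter_pmf i) fst = measure_pmf.expectation (map_pmf (letter_input i) msg_state_pmf) (\<lambda>t. ent (chan_kernel W t))"
      unfolding letter_pmf_def by (rule H_cond_kernel) (auto simp: finite_msg_state_pmf finite_set_pmf)
    then show "measure_pmf.expectation msg_state_pmf (\<lambda>ws. ent (chan_kernel W (letter_input i ws))) = H (letter_pmf i) (\<lambda>v. v) - H (letter_pmf i) fst"
      by simp
  qed
  finally show ?thesis .
qed

lemma H_letter: "i < n \<Longrightarrow> H (letter_pmf i) f = H code_pmf (\<lambda>\<omega>. f (letter_input i (fst \<omega>), snd \<omega> ! i))"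
  using H_comp[of code_pmf f "\<lambda>\<omega>. (letter_input i (fst \<omega>), snd \<omega> ! i)"] letter_pmf_eq by simp

text \<open>Multi-letter bound on the private rate, with \<open>W = (Wc, W1)\<close>:
  \<open>log M1 = H(W1|Wc,S\<^sup>n) \<le> H(W|Y\<^sup>n) + I(W1;Y\<^sup>n|Wc,S\<^sup>n)\<close>; adding \<open>X2\<^sup>n\<close> (a function of
  \<open>(Wc,S\<^sup>n)\<close>) to the conditioning, the chain rule and memorylessness give
  \<open>I(W1;Y\<^sup>n|Wc,S\<^sup>n) \<le> \<Sum>\<^sub>i H(Y\<^sub>i|S\<^sub>i,X2\<^sub>i) - H(Y\<^sub>i|S\<^sub>i,X1\<^sub>i,X2\<^sub>i)\<close>.\<close>

lemma private_rate_bound: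
  "log 2 M1 \<le> (H code_pmf (\<lambda>\<omega>. (fst (fst \<omega>), snd \<omega>)) - H code_pmf snd) + (\<Sum>i<n. info_private (letter_pmf i))"
proof -
  let ?W = "\<lambda>\<omega>::((nat \<times> nat) \<times> 's list) \<times> 'y list. fst (fst \<omega>)"
  let ?S = "\<lambda>\<omega>::((nat \<times> nat) \<times> 's list) \<times> 'y list. snd (fst \<omega>)"
  let ?Y = "\<lambda>\<omega>::((nat \<times> nat) \<times> 's list) \<times> 'y list. snd \<omega>"
  let ?Wc = "\<lambda>\<omega>::((nat \<times> nat) \<times> 's list) \<times> 'y list. fst (fst (fst \<omega>))"
  let ?X2L = "\<lambda>\<omega>::((nat \<times> nat) \<times> 's list) \<times> 'y list. map (\<lambda>i. phi2 (snd (fst \<omega>)) (fst (fst (fst \<omega>))) ! i) [0..<n]"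
  let ?A = "\<lambda>i (\<omega>::((nat \<times> nat) \<times> 's list) \<times> 'y list). snd \<omega> ! i"
  let ?B = "\<lambda>i (\<omega>::((nat \<times> nat) \<times> 's list) \<times> 'y list). (snd (fst \<omega>) ! i, phi2 (snd (fst \<omega>)) (fst (fst (fst \<omega>))) ! i)"
  note fin = finite_code_pmf
  have log_M1: "log 2 M1 = H code_pmf fst - H code_pmf (\<lambda>\<omega>. (?Wc \<omega>, ?S \<omega>))"
    using H_code_pmf_fst ent_msg_state_pmf H_code_pmf_common_state by simp
  have equivocation: "H code_pmf (\<lambda>\<omega>. (?W \<omega>, (?Wc \<omega>, ?S \<omega>), ?Y \<omega>)) + H code_pmf ?Y
      \<le> H code_pmf (\<lambda>\<omega>. (?W \<omega>, ?Y \<omega>)) + H code_pmf (\<lambda>\<omega>. ((?Wc \<omega>, ?S \<omega>), ?Y \<omega>))"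
    by (rule H_submodular[OF fin])
  have equivocation_eq: "H code_pmf (\<lambda>\<omega>. (?W \<omega>, (?Wc \<omega>, ?S \<omega>), ?Y \<omega>)) = H code_pmf (\<lambda>\<omega>. \<omega>)"
    by (rule H_bijection[OF fin, where h="\<lambda>((w,s),y). (w,(fst w,s),y)" and g="\<lambda>(w,(c,s),y). ((w,s),y)"]) auto
  have add_X2: "H code_pmf (\<lambda>\<omega>. (?Y \<omega>, ?Wc \<omega>, (?S \<omega>, ?X2L \<omega>))) + H code_pmf (\<lambda>\<omega>. (?S \<omega>, ?X2L \<omega>))
      \<le> H code_pmf (\<lambda>\<omega>. (?Y \<omega>, (?S \<omega>, ?X2L \<omega>))) + H code_pmf (\<lambda>\<omega>. (?Wc \<omega>, (?S \<omega>, ?X2L \<omega>)))"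
    by (rule H_submodular[OF fin])
  have add_X2_lhs: "H code_pmf (\<lambda>\<omega>. (?Y \<omega>, ?Wc \<omega>, (?S \<omega>, ?X2L \<omega>)))
      = H code_pmf (\<lambda>\<omega>. ((?Wc \<omega>, ?S \<omega>), ?Y \<omega>))"
    by (rule H_bijection[OF fin, where h="\<lambda>((c,s),y). (y,c,(s, map (\<lambda>i. phi2 s c ! i) [0..<n]))"
          and g="\<lambda>(y,c,(s,xl)). ((c,s),y)"]) auto
  have add_X2_rhs: "H code_pmf (\<lambda>\<omega>. (?Wc \<omega>, (?S \<omega>, ?X2L \<omega>))) = H code_pmf (\<lambda>\<omega>. (?Wc \<omega>, ?S \<omega>))"
    by (rule H_bijection[OF fin, where h="\<lambda>(c,s). (c,(s, map (\<lambda>i. phi2 s c ! i) [0..<n]))" and g="\<lambda>(c,(s,xl)). (c,s)"]) auto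
  have out_chain: "H code_pmf (\<lambda>\<omega>. (map (\<lambda>i. ?A i \<omega>) [0..<n], map (\<lambda>i. ?B i \<omega>) [0..<n])) - H code_pmf (\<lambda>\<omega>. map (\<lambda>i. ?B i \<omega>) [0..<n])
      \<le> (\<Sum>i<n. H code_pmf (\<lambda>\<omega>. (?A i \<omega>, ?B i \<omega>)) - H code_pmf (?B i))"
    by (rule H_cond_list_le[OF fin])
  have out_chain_lhs: "H code_pmf (\<lambda>\<omega>. (map (\<lambda>i. ?A i \<omega>) [0..<n], map (\<lambda>i. ?B i \<omega>) [0..<n]))
      = H code_pmf (\<lambda>\<omega>. (?Y \<omega>, (?S \<omega>, ?X2L \<omega>)))"
    by (rule H_bijection[OF fin, where h="\<lambda>(ys,(s,xl)). (ys, zip s xl)" and g="\<lambda>(ys,l). (ys, (map fst l, map snd l))"])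
       (auto dest: set_code_pmf simp: map_nth_len zip_map_upt map_fst_nth)
  have out_chain_rhs: "H code_pmf (\<lambda>\<omega>. map (\<lambda>i. ?B i \<omega>) [0..<n]) = H code_pmf (\<lambda>\<omega>. (?S \<omega>, ?X2L \<omega>))"
    by (rule H_bijection[OF fin, where h="\<lambda>(s,xl). zip s xl" and g="\<lambda>l. (map fst l, map snd l)"])
       (auto dest: set_code_pmf simp: map_nth_len zip_map_upt map_fst_nth)
  have letters: "(\<Sum>i<n. H code_pmf (\<lambda>\<omega>. (?A i \<omega>, ?B i \<omega>)) - H code_pmf (?B i)) - (\<Sum>i<n. H (letter_pmf i) (\<lambda>v. v) - H (letter_pmf i) fst)
      = (\<Sum>i<n. info_private (letter_pmf i))"
    unfolding sum_subtractf[symmetric]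
    by (intro sum.cong refl) (simp add: info_private_def H_letter letter_input_def x2_def)
  have memoryless: "H code_pmf (\<lambda>v. v) - H code_pmf fst = (\<Sum>i<n. H (letter_pmf i) (\<lambda>v. v) - H (letter_pmf i) fst)" by (rule H_cond_out_letters)
  show ?thesis using log_M1 equivocation equivocation_eq add_X2 add_X2_lhs add_X2_rhs out_chain out_chain_lhs out_chain_rhs letters memoryless by linarith
qed

lemma H_letter_state: "i < n \<Longrightarrow> H (letter_pmf i) (\<lambda>v. fst (fst v)) = ent Q"
proof -
  assume i: "i < n"
  have "H (letter_pmf i) (\<lambda>v. fst (fst v)) = H code_pmf (\<lambda>\<omega>. snd (fst \<omega>) ! i)" using H_letter[OF i, of "\<lambda>v. fst (fst v)"] by (simp add: letter_input_def)
  also have "\<dots> = ent (map_pmf (\<lambda>s. s ! i) (map_pmf snd (map_pmf fst code_pmf)))"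
    unfolding H_def by (simp add: map_pmf_comp)
  also have "\<dots> = ent Q" unfolding map_fst_code_pmf msg_state_pmf_def map_snd_pair_pmf state_pmf_def using i by (simp add: nth_indep_pmf)
  finally show ?thesis .
qed

text \<open>Since \<open>W\<close> and \<open>S\<^sup>n\<close> are independent and
  \<open>X1\<^sup>n\<close> is a function of \<open>W\<close>,
  \<open>log Mc M1 = H(W) \<le> H(W|Y\<^sup>n) + H(Y\<^sup>n) + H(S\<^sup>n|X1\<^sup>n,Y\<^sup>n) - H(Y\<^sup>n|W,S\<^sup>n) - H(S\<^sup>n)\<close>;
  subadditivity, \<open>H(S\<^sup>n) = \<Sum>\<^sub>i H(S\<^sub>i)\<close> and memorylessness make every term a sum over letters.\<close>

lemma sum_rate_bound:
  "log 2 Mc + log 2 M1 \<le> (H code_pmf (\<lambda>\<omega>. (fst (fst \<omega>), snd \<omega>)) - H code_pmf snd) + (\<Sum>i<n. info_sum (letter_pmf i))"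
proof -
  let ?W = "\<lambda>\<omega>::((nat \<times> nat) \<times> 's list) \<times> 'y list. fst (fst \<omega>)"
  let ?S = "\<lambda>\<omega>::((nat \<times> nat) \<times> 's list) \<times> 'y list. snd (fst \<omega>)"
  let ?Y = "\<lambda>\<omega>::((nat \<times> nat) \<times> 's list) \<times> 'y list. snd \<omega>"
  let ?X1L = "\<lambda>\<omega>::((nat \<times> nat) \<times> 's list) \<times> 'y list. map (\<lambda>i. phi1 (fst (fst (fst \<omega>))) (snd (fst (fst \<omega>))) ! i) [0..<n]"
  let ?A = "\<lambda>i (\<omega>::((nat \<times> nat) \<times> 's list) \<times> 'y list). snd (fst \<omega>) ! i"
  let ?B = "\<lambda>i (\<omega>::((nat \<times> nat) \<times> 's list) \<times> 'y list). (phi1 (fst (fst (fst \<omega>))) (snd (fst (fst \<omega>))) ! i, snd \<omega> ! i)"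
  let ?Yi = "\<lambda>i (\<omega>::((nat \<times> nat) \<times> 's list) \<times> 'y list). snd \<omega> ! i"
  note fin = finite_code_pmf
  have log_M: "H code_pmf ?W = log 2 Mc + log 2 M1" by (rule H_code_pmf_msg)
  have msg_state_indep: "H code_pmf fst = H code_pmf ?W + H code_pmf ?S" using H_code_pmf_fst ent_msg_state_pmf H_code_pmf_msg H_code_pmf_state by simp
  have equivocation: "H code_pmf (\<lambda>\<omega>. (?S \<omega>, ?W \<omega>, (?X1L \<omega>, ?Y \<omega>))) + H code_pmf (\<lambda>\<omega>. (?X1L \<omega>, ?Y \<omega>))
      \<le> H code_pmf (\<lambda>\<omega>. (?S \<omega>, (?X1L \<omega>, ?Y \<omega>))) + H code_pmf (\<lambda>\<omega>. (?W \<omega>, (?X1L \<omega>, ?Y \<omega>)))"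
    by (rule H_submodular[OF fin])
  have equivocation_eq: "H code_pmf (\<lambda>\<omega>. (?S \<omega>, ?W \<omega>, (?X1L \<omega>, ?Y \<omega>))) = H code_pmf (\<lambda>\<omega>. \<omega>)"
    by (rule H_bijection[OF fin, where h="\<lambda>((w,s),y). (s,w,(map (\<lambda>i. phi1 (fst w) (snd w) ! i) [0..<n], y))"
          and g="\<lambda>(s,w,(xl,y)). ((w,s),y)"]) auto
  have drop_X1: "H code_pmf (\<lambda>\<omega>. (?W \<omega>, (?X1L \<omega>, ?Y \<omega>))) = H code_pmf (\<lambda>\<omega>. (?W \<omega>, ?Y \<omega>))"
    by (rule H_bijection[OF fin, where h="\<lambda>(w,y). (w,(map (\<lambda>i. phi1 (fst w) (snd w) ! i) [0..<n], y))"
          and g="\<lambda>(w,(xl,y)). (w,y)"]) auto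
  have state_chain: "H code_pmf (\<lambda>\<omega>. (map (\<lambda>i. ?A i \<omega>) [0..<n], map (\<lambda>i. ?B i \<omega>) [0..<n])) - H code_pmf (\<lambda>\<omega>. map (\<lambda>i. ?B i \<omega>) [0..<n])
      \<le> (\<Sum>i<n. H code_pmf (\<lambda>\<omega>. (?A i \<omega>, ?B i \<omega>)) - H code_pmf (?B i))"
    by (rule H_cond_list_le[OF fin])
  have state_chain_lhs: "H code_pmf (\<lambda>\<omega>. (map (\<lambda>i. ?A i \<omega>) [0..<n], map (\<lambda>i. ?B i \<omega>) [0..<n]))
      = H code_pmf (\<lambda>\<omega>. (?S \<omega>, (?X1L \<omega>, ?Y \<omega>)))"
    by (rule H_bijection[OF fin, where h="\<lambda>(s,(xl,y)). (s, zip xl y)" and g="\<lambda>(s,l). (s, (map fst l, map snd l))"])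
       (auto dest: set_code_pmf simp: map_nth_len zip_map_upt2 map_fst_nth map_snd_nth)
  have state_chain_rhs: "H code_pmf (\<lambda>\<omega>. map (\<lambda>i. ?B i \<omega>) [0..<n]) = H code_pmf (\<lambda>\<omega>. (?X1L \<omega>, ?Y \<omega>))"
    by (rule H_bijection[OF fin, where h="\<lambda>(xl,y). zip xl y" and g="\<lambda>l. (map fst l, map snd l)"])
       (auto dest: set_code_pmf simp: map_nth_len zip_map_upt2 map_fst_nth map_snd_nth)
  have out_subadd: "H code_pmf (\<lambda>\<omega>. (map (\<lambda>i. ?Yi i \<omega>) [0..<n], map (\<lambda>i. ()) [0..<n])) - H code_pmf (\<lambda>\<omega>. map (\<lambda>i. ()) [0..<n])
      \<le> (\<Sum>i<n. H code_pmf (\<lambda>\<omega>. (?Yi i \<omega>, ())) - H code_pmf (\<lambda>\<omega>. ()))"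
    by (rule H_cond_list_le[OF fin])
  have out_subadd_eq: "H code_pmf (\<lambda>\<omega>. (map (\<lambda>i. ?Yi i \<omega>) [0..<n], map (\<lambda>i. ()) [0..<n])) = H code_pmf ?Y"
    by (rule H_bijection[OF fin, where h="\<lambda>y. (y, map (\<lambda>i. ()) [0..<n])" and g="fst"])
       (auto dest: set_code_pmf simp: map_nth_len)
  have state_letters: "H code_pmf ?S = (\<Sum>i<n. H (letter_pmf i) (\<lambda>v. fst (fst v)))"
    using H_code_pmf_state H_letter_state by simp
  have memoryless: "H code_pmf (\<lambda>v. v) - H code_pmf fst = (\<Sum>i<n. H (letter_pmf i) (\<lambda>v. v) - H (letter_pmf i) fst)" by (rule H_cond_out_letters)
  have letters: "(\<Sum>i<n. H code_pmf (\<lambda>\<omega>. (?Yi i \<omega>, ())) - H code_pmf (\<lambda>\<omega>. ())) - (\<Sum>i<n. H (letter_pmf i) (\<lambda>v. fst (fst v)))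
     + (\<Sum>i<n. H code_pmf (\<lambda>\<omega>. (?A i \<omega>, ?B i \<omega>)) - H code_pmf (?B i)) - (\<Sum>i<n. H (letter_pmf i) (\<lambda>v. v) - H (letter_pmf i) fst) = (\<Sum>i<n. info_sum (letter_pmf i))"
    unfolding sum_subtractf[symmetric] sum.distrib[symmetric]
    by (intro sum.cong refl) (simp add: info_sum_def H_letter letter_input_def x1_def H_const)
  show ?thesis using log_M msg_state_indep equivocation equivocation_eq drop_X1 state_chain state_chain_lhs state_chain_rhs out_subadd out_subadd_eq state_letters memoryless letters
    by (simp add: H_const)
qed

text \<open>Fano's inequality for the decoder \<open>psi\<close>: guessing the error indicator costs at
  most one bit, and on an error the message is one of \<open>Mc M1\<close> values.\<close>

definition "Pe = measure_pmf.prob code_pmf {\<omega>. psi (snd \<omega>) \<noteq> fst (fst \<omega>)}"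

lemma fano_bound: "H code_pmf (\<lambda>\<omega>. (fst (fst \<omega>), snd \<omega>)) - H code_pmf snd \<le> 1 + Pe * log 2 (Mc * M1)"
proof -
  note fin = finite_code_pmf
  define K :: nat where "K = Mc * M1"
  have K: "K \<ge> 1" using Mc M1 by (simp add: K_def)
  define V where "V = (\<lambda>\<omega>::((nat \<times> nat) \<times> 's list) \<times> 'y list. if psi (snd \<omega>) \<noteq> fst (fst \<omega>) then Some (fst (fst \<omega>)) else None)"
  define r :: "(nat \<times> nat) option \<Rightarrow> real" where "r = (\<lambda>v. case v of None \<Rightarrow> 1/2 | Some w \<Rightarrow> 1 / (2 * K))"
  have h1: "H code_pmf (\<lambda>\<omega>. (fst (fst \<omega>), snd \<omega>)) \<le> H code_pmf (\<lambda>\<omega>. (V \<omega>, snd \<omega>))"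
    by (rule H_function_le[OF fin, where h="\<lambda>(v,y). (case v of None \<Rightarrow> psi y | Some w \<Rightarrow> w, y)"]) (auto simp: V_def)
  have h2: "H code_pmf (\<lambda>\<omega>. (V \<omega>, snd \<omega>)) \<le> H code_pmf V + H code_pmf snd" by (rule H_subadditive[OF fin])
  let ?Sup = "insert None (Some ` ({1..Mc} \<times> {1..M1}))"
  have supV: "set_pmf (map_pmf V code_pmf) \<subseteq> ?Sup" using set_code_pmf(1) by (auto simp: V_def)
  have h3: "H code_pmf V \<le> measure_pmf.expectation (map_pmf V code_pmf) (\<lambda>v. - log 2 (r v))"
    unfolding H_def
  proof (rule gibbs_inequality)
    show "finite (set_pmf (map_pmf V code_pmf))" using fin by simp
    show "r v > 0" for v using K by (auto simp: r_def split: option.splits)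
    have "(\<Sum>v\<in>set_pmf (map_pmf V code_pmf). r v) \<le> (\<Sum>v\<in>?Sup. r v)"
      by (rule sum_mono2) (use supV K in \<open>auto simp: r_def split: option.splits\<close>)
    also have "\<dots> = 1/2 + (\<Sum>v\<in>Some ` ({1..Mc} \<times> {1..M1}). r v)" by (subst sum.insert) (auto simp: r_def)
    also have "\<dots> = 1/2 + real (Mc * M1) * (1 / (2 * K))"
      by (subst sum.reindex) (auto simp: r_def)
    also have "\<dots> = 1" using K by (simp add: K_def)
    finally show "(\<Sum>v\<in>set_pmf (map_pmf V code_pmf). r v) \<le> 1" .
  qed
  also have "\<dots> = measure_pmf.expectation code_pmf (\<lambda>\<omega>. 1 + log 2 K * indicator {\<omega>. psi (snd \<omega>) \<noteq> fst (fst \<omega>)} \<omega>)"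
    unfolding integral_map_pmf
    by (rule expectation_cong) (use K in \<open>auto simp: V_def r_def log_divide log_mult\<close>)
  also have "\<dots> = 1 + log 2 K * Pe"
    by (subst expectation_add[OF fin]) (simp add: Pe_def)
  finally show ?thesis using h1 h2 by (simp add: K_def mult.commute)
qed

lemma err_prob_eq_Pe: "err_prob Q W n Mc M1 phi1 phi2 psi = Pe"
proof -
  let ?Sup = "(({1..Mc} \<times> {1..M1}) \<times> (seqs n :: 's list set)) \<times> (seqs n :: 'y list set)"
  define F where "F = (\<lambda>\<omega>::((nat \<times> nat) \<times> 's list) \<times> 'y list. 1 / (real Mc * real M1) *
     (if psi (snd \<omega>) \<noteq> fst (fst \<omega>) then state_n Q (snd (fst \<omega>)) * chan_n W (phi1 (fst (fst (fst \<omega>))) (snd (fst (fst \<omega>))))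
        (phi2 (snd (fst \<omega>)) (fst (fst (fst \<omega>)))) (snd (fst \<omega>)) (snd \<omega>) else 0))"
  have f1: "finite (seqs n :: 's list set)" by (rule finite_seqs)
  have f2: "finite (seqs n :: 'y list set)" by (rule finite_seqs)
  have finS: "finite ?Sup" using f1 f2 by simp
  have "Pe = measure_pmf.expectation code_pmf (indicator {\<omega>. psi (snd \<omega>) \<noteq> fst (fst \<omega>)})"
    by (simp add: Pe_def)
  also have "\<dots> = (\<Sum>\<omega>\<in>?Sup. indicator {\<omega>. psi (snd \<omega>) \<noteq> fst (fst \<omega>)} \<omega> * pmf code_pmf \<omega>)"
  proof (rule integral_measure_pmf_real[OF finS])
    fix \<omega> assume "\<omega> \<in> set_pmf code_pmf"
    then show "\<omega> \<in> ?Sup" using set_code_pmf[of \<omega>] by (cases \<omega>) (auto simp: seqs_def)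
  qed
  also have "\<dots> = (\<Sum>\<omega>\<in>?Sup. F \<omega>)"
  proof (rule sum.cong[OF refl])
    fix \<omega> assume o: "\<omega> \<in> ?Sup"
    obtain wc w1 s y where od: "\<omega> = (((wc, w1), s), y)" by (metis prod.collapse)
    have ls: "length s = n" and ly: "length y = n" and wc: "wc \<in> {1..Mc}" and w1: "w1 \<in> {1..M1}"
      using o by (auto simp: od seqs_def)
    have "pmf code_pmf \<omega> = pmf msg_state_pmf ((wc, w1), s) * pmf (out_pmf ((wc, w1), s)) y"
      unfolding code_pmf_def od by (rule pmf_bind_pair)
    also have "\<dots> = 1 / (real Mc * real M1) * state_n Q s * chan_n W (phi1 wc w1) (phi2 s wc) s y"
      using ls ly wc w1 msg_sets_nonempty
      by (simp add: msg_state_pmf_def msg_pmf_def pmf_pair state_pmf_def pmf_indep_pmf out_pmf_def state_n_def chan_n_def letter_input_def x1_def x2_def chan_kernel_def)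
    finally show "indicator {\<omega>. psi (snd \<omega>) \<noteq> fst (fst \<omega>)} \<omega> * pmf code_pmf \<omega> = F \<omega>"
      by (simp add: F_def od)
  qed
  also have "\<dots> = err_prob Q W n Mc M1 phi1 phi2 psi"
    unfolding err_prob_def F_def sum4 fst_conv snd_conv by (simp add: sum_distrib_left)
  finally show ?thesis by simp
qed

text \<open>Marginals of a letter: the state letter has law \<open>Q\<close> and is independent of the
  uninformed encoder's letter \<open>X1\<^sub>i\<close>, which depends on the messages only.\<close>

lemma letter_state_marginal: "i < n \<Longrightarrow> map_pmf (\<lambda>v. fst (fst v)) (letter_pmf i) = Q"
proof -
  assume i: "i < n"
  have "map_pmf (\<lambda>v. fst (fst v)) (letter_pmf i) = map_pmf (\<lambda>t. fst t) (map_pmf (letter_input i) msg_state_pmf)"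
    unfolding letter_pmf_def by (simp add: map_bind_pmf map_pmf_comp map_pmf_def[symmetric])
  also have "\<dots> = map_pmf (\<lambda>s. s ! i) (map_pmf snd msg_state_pmf)" by (simp add: map_pmf_comp letter_input_def)
  also have "\<dots> = Q" unfolding msg_state_pmf_def map_snd_pair_pmf state_pmf_def using i by (simp add: nth_indep_pmf)
  finally show ?thesis .
qed

lemma letter_state_input_marginal: "i < n \<Longrightarrow> map_pmf (\<lambda>t. (fst t, fst (snd t))) (map_pmf (letter_input i) msg_state_pmf)
    = pair_pmf Q (map_pmf (\<lambda>w. x1 w i) msg_pmf)"
proof -
  assume i: "i < n"
  have "map_pmf (\<lambda>t. (fst t, fst (snd t))) (map_pmf (letter_input i) msg_state_pmf)
      = map_pmf (\<lambda>(x, y). (y, x)) (map_pmf (\<lambda>(a, b). ((\<lambda>w. x1 w i) a, (\<lambda>s. s ! i) b)) (pair_pmf msg_pmf state_pmf))"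
    unfolding msg_state_pmf_def by (simp add: map_pmf_comp letter_input_def split_beta)
  also have "\<dots> = map_pmf (\<lambda>(x, y). (y, x)) (pair_pmf (map_pmf (\<lambda>w. x1 w i) msg_pmf) Q)"
    unfolding map_pair state_pmf_def using i by (simp add: nth_indep_pmf)
  also have "\<dots> = pair_pmf Q (map_pmf (\<lambda>w. x1 w i) msg_pmf)" by (rule pair_commute_pmf[symmetric])
  finally show ?thesis .
qed

definition "time_pmf = pmf_of_set {..<n}"
definition "mixed_input_pmf = bind_pmf time_pmf (\<lambda>i. map_pmf (letter_input i) msg_state_pmf)"
definition "mixed_pmf = bind_pmf time_pmf letter_pmf"
definition "mixed_x1_pmf = bind_pmf time_pmf (\<lambda>i. map_pmf (\<lambda>w. x1 w i) msg_pmf)"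

lemma set_time_pmf: "set_pmf time_pmf = {..<n}"
  unfolding time_pmf_def using n_pos by (simp add: set_pmf_of_lessThan)

lemma mixed_pmf_channel: "mixed_pmf = bind_pmf mixed_input_pmf (\<lambda>t. map_pmf (Pair t) (chan_kernel W t))"
  unfolding mixed_pmf_def mixed_input_pmf_def letter_pmf_def by (simp add: bind_assoc_pmf)

lemma mixed_input_marginal:
  "map_pmf (\<lambda>t. (fst t, fst (snd t))) mixed_input_pmf = pair_pmf Q mixed_x1_pmf"
proof (rule pmf_eqI)
  fix u :: "'s \<times> 'x1"
  obtain s a where u: "u = (s, a)" by (cases u)
  have "map_pmf (\<lambda>t. (fst t, fst (snd t))) mixed_input_pmf
      = bind_pmf time_pmf (\<lambda>i. pair_pmf Q (map_pmf (\<lambda>w. x1 w i) msg_pmf))"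
    unfolding mixed_input_pmf_def map_bind_pmf using letter_state_input_marginal set_time_pmf
    by (intro bind_pmf_cong) auto
  then have "pmf (map_pmf (\<lambda>t. (fst t, fst (snd t))) mixed_input_pmf) u
      = measure_pmf.expectation time_pmf (\<lambda>i. pmf Q s * pmf (map_pmf (\<lambda>w. x1 w i) msg_pmf) a)"
    by (simp add: pmf_bind pmf_pair u)
  also have "\<dots> = pmf Q s * pmf mixed_x1_pmf a" by (simp add: mixed_x1_pmf_def pmf_bind)
  finally show "pmf (map_pmf (\<lambda>t. (fst t, fst (snd t))) mixed_input_pmf) u = pmf (pair_pmf Q mixed_x1_pmf) u"
    by (simp add: pmf_pair u)
qed

lemma mixed_pmf_joint: "\<exists>p2. pmf (map_pmf flatten mixed_pmf) = joint Q mixed_x1_pmf p2 W"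
  unfolding mixed_pmf_channel by (rule joint_of_input_law[OF mixed_input_marginal])

text \<open>Because the channel is memoryless, \<open>H(Y|input letter)\<close> of the mixture is exactly the
  average over the letters (no time-sharing loss in this term).\<close>

lemma mixed_cond_out:
  "H mixed_pmf (\<lambda>v. v) - H mixed_pmf fst = (\<Sum>i<n. H (letter_pmf i) (\<lambda>v. v) - H (letter_pmf i) fst) / n"
proof -
  have letter: "H (letter_pmf i) (\<lambda>v. v) - H (letter_pmf i) fst
      = measure_pmf.expectation (map_pmf (letter_input i) msg_state_pmf) (\<lambda>t. ent (chan_kernel W t))" for i
    unfolding letter_pmf_def by (rule H_cond_kernel) (auto simp: finite_msg_state_pmf finite_set_pmf)
  have "H mixed_pmf (\<lambda>v. v) - H mixed_pmf fst = measure_pmf.expectation mixed_input_pmf (\<lambda>t. ent (chan_kernel W t))"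
    unfolding mixed_pmf_channel by (rule H_cond_kernel) (auto simp: finite_set_pmf)
  also have "\<dots> = measure_pmf.expectation time_pmf
      (\<lambda>i. measure_pmf.expectation (map_pmf (letter_input i) msg_state_pmf) (\<lambda>t. ent (chan_kernel W t)))"
    unfolding mixed_input_pmf_def by (rule expectation_bind) (auto simp: set_time_pmf finite_msg_state_pmf)
  also have "\<dots> = (\<Sum>i<n. measure_pmf.expectation (map_pmf (letter_input i) msg_state_pmf) (\<lambda>t. ent (chan_kernel W t))) / n"
    unfolding time_pmf_def using n_pos by (rule expectation_pmf_of_lessThan)
  finally show ?thesis by (simp add: letter)
qed

lemma time_sharing_letters:
  "(\<Sum>i<n. H (letter_pmf i) (\<lambda>v. (A v, B v)) - H (letter_pmf i) B) / n
     \<le> H mixed_pmf (\<lambda>v. (A v, B v)) - H mixed_pmf B"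
  unfolding mixed_pmf_def time_pmf_def using n_pos finite_letter_pmf by (rule time_sharing_cond_le)

lemma avg_info_private_le: "(\<Sum>i<n. info_private (letter_pmf i)) / n \<le> info_private mixed_pmf"
proof -
  have "(\<Sum>i<n. info_private (letter_pmf i)) / n
      = (\<Sum>i<n. H (letter_pmf i) (\<lambda>v. (snd v, (fst (fst v), snd (snd (fst v)))))
                - H (letter_pmf i) (\<lambda>v. (fst (fst v), snd (snd (fst v))))) / n
        - (\<Sum>i<n. H (letter_pmf i) (\<lambda>v. v) - H (letter_pmf i) fst) / n"
    unfolding info_private_def sum_subtractf diff_divide_distrib by simp
  then show ?thesis
    using time_sharing_letters[of snd "\<lambda>v. (fst (fst v), snd (snd (fst v)))"] mixed_cond_out
    unfolding info_private_def by linarith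
qed

text \<open>In the sum-rate quantity the term \<open>H(S)\<close> is the same for every letter and for
  the mixture, since each state letter has law \<open>Q\<close>.\<close>

lemma H_mixed_state: "H mixed_pmf (\<lambda>v. fst (fst v)) = ent Q"
proof -
  have "map_pmf (\<lambda>v. fst (fst v)) mixed_pmf = bind_pmf time_pmf (\<lambda>i. Q)"
    unfolding mixed_pmf_def map_bind_pmf using letter_state_marginal set_time_pmf
    by (intro bind_pmf_cong) auto
  then show ?thesis by (simp add: H_def)
qed

lemma avg_info_sum_le: "(\<Sum>i<n. info_sum (letter_pmf i)) / n \<le> info_sum mixed_pmf"
proof -
  have hsL: "(\<Sum>i<n. H (letter_pmf i) (\<lambda>v. fst (fst v))) / n = ent Q"
    using H_letter_state n_pos by simp
  have "(\<Sum>i<n. info_sum (letter_pmf i)) / n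
      = (\<Sum>i<n. H (letter_pmf i) (\<lambda>v. (snd v, ())) - H (letter_pmf i) (\<lambda>v. ())) / n
        - (\<Sum>i<n. H (letter_pmf i) (\<lambda>v. fst (fst v))) / n
        + (\<Sum>i<n. H (letter_pmf i) (\<lambda>v. (fst (fst v), (fst (snd (fst v)), snd v)))
                - H (letter_pmf i) (\<lambda>v. (fst (snd (fst v)), snd v))) / n
        - (\<Sum>i<n. H (letter_pmf i) (\<lambda>v. v) - H (letter_pmf i) fst) / n"
    unfolding info_sum_def sum_subtractf sum.distrib diff_divide_distrib add_divide_distrib H_const
    by simp
  then show ?thesis
    using time_sharing_letters[of snd "\<lambda>v. ()"] mixed_cond_out hsL H_mixed_state
      time_sharing_letters[of "\<lambda>v. fst (fst v)" "\<lambda>v. (fst (snd (fst v)), snd v)"]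
    unfolding info_sum_def H_const by linarith
qed

lemma single_letter:
  "\<exists>p1 p2. (\<Sum>i<n. info_private (letter_pmf i)) / n \<le> cond_mi (joint Q p1 p2 W) vX1 vY (\<lambda>w. (vS w, vX2 w))
     \<and> (\<Sum>i<n. info_sum (letter_pmf i)) / n
         \<le> cond_mi (joint Q p1 p2 W) (\<lambda>w. (vX1 w, vX2 w)) vY vS - cond_mi (joint Q p1 p2 W) vX1 vS vY"
proof -
  obtain p2 where p2: "pmf (map_pmf flatten mixed_pmf) = joint Q mixed_x1_pmf p2 W"
    using mixed_pmf_joint by blast
  show ?thesis
  proof (intro exI conjI)
    show "(\<Sum>i<n. info_private (letter_pmf i)) / n
        \<le> cond_mi (joint Q mixed_x1_pmf p2 W) vX1 vY (\<lambda>w. (vS w, vX2 w))"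
      using avg_info_private_le cond_mi_info_private[of mixed_pmf] unfolding p2 by simp
    show "(\<Sum>i<n. info_sum (letter_pmf i)) / n \<le> cond_mi (joint Q mixed_x1_pmf p2 W) (\<lambda>w. (vX1 w, vX2 w)) vY vS
        - cond_mi (joint Q mixed_x1_pmf p2 W) vX1 vS vY"
      using avg_info_sum_le cond_mi_info_sum[of mixed_pmf] unfolding p2 by simp
  qed
qed

lemma blocklength_converse:
  "\<exists>p1 p2. log 2 M1 \<le> 1 + Pe * log 2 (Mc * M1) + n * cond_mi (joint Q p1 p2 W) vX1 vY (\<lambda>w. (vS w, vX2 w))
     \<and> log 2 Mc + log 2 M1 \<le> 1 + Pe * log 2 (Mc * M1)
         + n * (cond_mi (joint Q p1 p2 W) (\<lambda>w. (vX1 w, vX2 w)) vY vS - cond_mi (joint Q p1 p2 W) vX1 vS vY)"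
proof -
  obtain p1 p2 where
    c1: "(\<Sum>i<n. info_private (letter_pmf i)) / n \<le> cond_mi (joint Q p1 p2 W) vX1 vY (\<lambda>w. (vS w, vX2 w))" and
    c2: "(\<Sum>i<n. info_sum (letter_pmf i)) / n
       \<le> cond_mi (joint Q p1 p2 W) (\<lambda>w. (vX1 w, vX2 w)) vY vS - cond_mi (joint Q p1 p2 W) vX1 vS vY"
    using single_letter by blast
  have n: "real n > 0" using n_pos by simp
  have "(\<Sum>i<n. info_private (letter_pmf i)) \<le> n * cond_mi (joint Q p1 p2 W) vX1 vY (\<lambda>w. (vS w, vX2 w))"
    using c1 n by (simp add: divide_le_eq mult.commute)
  moreover have "(\<Sum>i<n. info_sum (letter_pmf i))
      \<le> n * (cond_mi (joint Q p1 p2 W) (\<lambda>w. (vX1 w, vX2 w)) vY vS - cond_mi (joint Q p1 p2 W) vX1 vS vY)"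
    using c2 n by (simp add: divide_le_eq mult.commute)
  ultimately show ?thesis
    using private_rate_bound sum_rate_bound fano_bound
    by (intro exI[of _ p1] exI[of _ p2] conjI) linarith+
qed

end

text \<open>The slack accounts for Fano's term and for rounding \<open>2\<^sup>n\<^sup>R\<close> up.\<close>

lemma err_prob_nonneg: "err_prob Q W n Mc M1 phi1 phi2 psi \<ge> 0"
  unfolding err_prob_def state_n_def chan_n_def
  by (intro mult_nonneg_nonneg sum_nonneg) (auto intro!: mult_nonneg_nonneg prod_nonneg)

lemma num_msgs_bounds:
  assumes R: "R \<ge> 0"
  shows "num_msgs n R \<ge> 1" "real n * R \<le> log 2 (num_msgs n R)" "log 2 (num_msgs n R) \<le> real n * R + 1"
proof -
  let ?x = "2 powr (real n * R)"
  have x1: "?x \<ge> 1" using R by (intro ge_one_powr_ge_zero) auto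
  have eq: "real (num_msgs n R) = real_of_int \<lceil>?x\<rceil>"
    unfolding num_msgs_def using x1 by simp
  have ge: "real (num_msgs n R) \<ge> ?x" unfolding eq by simp
  have le: "real (num_msgs n R) \<le> 2 * ?x" unfolding eq using x1 ceiling_correct[of ?x] by linarith
  show "num_msgs n R \<ge> 1" using ge x1 by linarith
  have pos: "real (num_msgs n R) > 0" using ge x1 by linarith
  have "log 2 ?x \<le> log 2 (num_msgs n R)" using ge pos x1 by (subst log_le_cancel_iff) auto
  then show "real n * R \<le> log 2 (num_msgs n R)" by simp
  have "log 2 (num_msgs n R) \<le> log 2 (2 * ?x)" using le pos by simp
  also have "\<dots> = 1 + real n * R" by (simp add: log_mult)
  finally show "log 2 (num_msgs n R) \<le> real n * R + 1" by simp
qed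

lemma code_rates_near_outer_region:
  fixes Q :: "'s::finite pmf" and W :: "'x1::finite \<Rightarrow> 'x2::finite \<Rightarrow> 's \<Rightarrow> 'y::finite pmf"
    and phi1 :: "nat \<Rightarrow> nat \<Rightarrow> 'x1 list" and phi2 :: "'s list \<Rightarrow> nat \<Rightarrow> 'x2 list"
    and psi :: "'y list \<Rightarrow> nat \<times> nat"
  assumes Rc: "0 \<le> Rc" and R1: "0 \<le> R1" and n: "n > 0"
  defines "e \<equiv> err_prob Q W n (num_msgs n Rc) (num_msgs n R1) phi1 phi2 psi"
  shows "(Rc - (1 + e * (n * (Rc + R1) + 2)) / n, R1 - (1 + e * (n * (Rc + R1) + 2)) / n) \<in> outer_region Q W"
proof -
  let ?Mc = "num_msgs n Rc" and ?M1 = "num_msgs n R1"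
  define d where "d = (1 + e * (n * (Rc + R1) + 2)) / n"
  have bc: "?Mc \<ge> 1" "real n * Rc \<le> log 2 ?Mc" "log 2 ?Mc \<le> real n * Rc + 1"
    by (rule num_msgs_bounds[OF Rc])+
  have b1: "?M1 \<ge> 1" "real n * R1 \<le> log 2 ?M1" "log 2 ?M1 \<le> real n * R1 + 1"
    by (rule num_msgs_bounds[OF R1])+
  interpret code_distribution Q W n ?Mc ?M1 phi1 phi2 psi
    using n bc(1) b1(1) by unfold_locales
  obtain p1 p2 where
    q1: "log 2 ?M1 \<le> 1 + e * log 2 (?Mc * ?M1) + n * cond_mi (joint Q p1 p2 W) vX1 vY (\<lambda>w. (vS w, vX2 w))" and
    q2: "log 2 ?Mc + log 2 ?M1 \<le> 1 + e * log 2 (?Mc * ?M1)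
          + n * (cond_mi (joint Q p1 p2 W) (\<lambda>w. (vX1 w, vX2 w)) vY vS - cond_mi (joint Q p1 p2 W) vX1 vS vY)"
    using blocklength_converse unfolding e_def err_prob_eq_Pe by blast
  have e0: "e \<ge> 0" unfolding e_def by (rule err_prob_nonneg)
  have "log 2 (real (?Mc * ?M1)) = log 2 ?Mc + log 2 ?M1"
    using bc(1) b1(1) by (simp add: log_mult)
  then have "e * log 2 (real (?Mc * ?M1)) \<le> e * (n * (Rc + R1) + 2)"
    using e0 bc b1 by (intro mult_left_mono) (auto simp: algebra_simps)
  moreover have "n * d = 1 + e * (n * (Rc + R1) + 2)" unfolding d_def using n by simp
  ultimately have fano_term: "1 + e * log 2 (real (?Mc * ?M1)) \<le> n * d" by linarith
  have d0: "d \<ge> 0" unfolding d_def using e0 Rc R1 by simp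
  have "real n * R1 \<le> real n * (d + cond_mi (joint Q p1 p2 W) vX1 vY (\<lambda>w. (vS w, vX2 w)))"
    using q1 b1(2) fano_term by (simp add: algebra_simps)
  moreover have "real n * (Rc + R1)
      \<le> real n * (d + (cond_mi (joint Q p1 p2 W) (\<lambda>w. (vX1 w, vX2 w)) vY vS - cond_mi (joint Q p1 p2 W) vX1 vS vY))"
    using q2 bc(2) b1(2) fano_term by (simp add: algebra_simps)
  ultimately show ?thesis
    using n d0 unfolding outer_region_def d_def[symmetric]
    by (auto simp: Let_def mult_le_cancel_left_pos intro!: exI[where x=p1] exI[where x=p2])
qed

text \<open>Achievable rate pairs are limits of such points, since the slack vanishes when
  the error probability does.\<close>

lemma achievable_in_closure_outer_region:
  fixes Q :: "'s::finite pmf" and W :: "'x1::finite \<Rightarrow> 'x2::finite \<Rightarrow> 's \<Rightarrow> 'y::finite pmf"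
  assumes "achievable Q W (Rc, R1)"
  shows "(Rc, R1) \<in> closure (outer_region Q W)"
proof -
  obtain phi1 :: "nat \<Rightarrow> nat \<Rightarrow> nat \<Rightarrow> 'x1 list" and phi2 :: "nat \<Rightarrow> 's list \<Rightarrow> nat \<Rightarrow> 'x2 list"
    and psi :: "nat \<Rightarrow> 'y list \<Rightarrow> nat \<times> nat"
    where Rc: "0 \<le> Rc" and R1: "0 \<le> R1"
      and lim: "(\<lambda>n. err_prob Q W n (num_msgs n Rc) (num_msgs n R1) (phi1 n) (phi2 n) (psi n)) \<longlonglongrightarrow> 0"
    using assms unfolding achievable_def by auto
  define e where "e k = err_prob Q W (Suc k) (num_msgs (Suc k) Rc) (num_msgs (Suc k) R1)
      (phi1 (Suc k)) (phi2 (Suc k)) (psi (Suc k))" for k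
  define d where "d k = (1 + e k * (Suc k * (Rc + R1) + 2)) / Suc k" for k
  have d_eq: "d = (\<lambda>k. 1 / real (Suc k) + e k * (Rc + R1) + 2 * e k * (1 / real (Suc k)))"
  proof (rule ext)
    have "(1 + a * (m * b + 2)) / m = 1 / m + a * b + 2 * a * (1 / m)" if "m > 0" for a b m :: real
      using that by (simp add: field_simps)
    then show "d k = 1 / real (Suc k) + e k * (Rc + R1) + 2 * e k * (1 / real (Suc k))" for k
      unfolding d_def by simp
  qed
  have "e \<longlonglongrightarrow> 0" unfolding e_def using LIMSEQ_Suc[OF lim] by simp
  then have "d \<longlonglongrightarrow> 0 + 0 * (Rc + R1) + 2 * 0 * 0"
    unfolding d_eq by (intro tendsto_intros LIMSEQ_Suc[OF lim_inverse_n'])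
  then have "d \<longlonglongrightarrow> 0" by simp
  then have "(\<lambda>k. (Rc - d k, R1 - d k)) \<longlonglongrightarrow> (Rc - 0, R1 - 0)"
    by (intro tendsto_intros)
  then have "(\<lambda>k. (Rc - d k, R1 - d k)) \<longlonglongrightarrow> (Rc, R1)" by simp
  moreover have "(Rc - d k, R1 - d k) \<in> outer_region Q W" for k
    using code_rates_near_outer_region[OF Rc R1, of "Suc k"] unfolding d_def e_def by simp
  ultimately show ?thesis
    unfolding closure_sequential by (intro exI[where x="\<lambda>k. (Rc - d k, R1 - d k)"]) auto
qed

theorem theorem2:
  fixes Q :: "'s::finite pmf"
    and W :: "'x1::finite \<Rightarrow> 'x2::finite \<Rightarrow> 's \<Rightarrow> 'y::finite pmf"
  shows "capacity_region Q W \<subseteq> closure (outer_region Q W)"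
  unfolding capacity_region_def
proof (rule closure_minimal)
  show "{r. achievable Q W r} \<subseteq> closure (outer_region Q W)"
    using achievable_in_closure_outer_region by fastforce
qed simp

end
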